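(* Let $(M,g,\varphi,\eta,\zeta)$ be an almost contact metric manifold of dimension $2n+1$ with $U(n)\times1$ intrinsic torsion $\xi$. Then $$s^{\rm alt}_{\mathfrak u(n)^\perp}=\tfrac12(i_8-i_{10}+i_{12}+i_{14})+2(i_7-i_{17}),\qquad s_{\mathfrak u(n)^\perp}=\tfrac12(s-s^* )+\mathrm{Ric}(\zeta,\zeta).$$
   Context: $(M,g)$ is an oriented Riemannian manifold of dimension $2n+1$ with Levi-Civita connection $\nabla$, a unit vector field $\zeta$, its dual one-form $\eta=g(\cdot,\zeta)$, and an endomorphism $\varphi$ with $\varphi^2X=-X+\eta(X)\zeta$ and $g(\varphi X,\varphi Y)=g(X,Y)-\eta(X)\eta(Y)$. This is a $U(n)\times1$-structure; $\mathfrak{so}(TM)=\mathfrak u(n)\oplus\mathfrak u(n)^\perp$ (orthogonal for the Killing form), and the projection onto $\mathfrak u(n)^\perp$ is $A\mapsto\frac12\big(A+\varphi A\varphi+\eta(A\,\cdot)\zeta+\eta(\cdot)A\zeta\big)$. The intrinsic torsion is $\xi_XY=\nabla^{U(n)}_XY-\nabla_XY$ where $\nabla^{U(n)}$ is induced by the $\mathfrak u(n)$-component of the Levi-Civita connection form; explicitly $\xi_XY=\frac12(\nabla_X\varphi)\varphi Y+\frac12(\nabla_X\eta)(Y)\zeta-\eta(Y)\nabla_X\zeta$. Conventions: $R(X,Y)=[\nabla_X,\nabla_Y]-\nabla_{[X,Y]}$; $(e_1,\dots,e_{2n})$ a local orthonormal frame of $\ker\eta$, completed by $\zeta$ to a frame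 $(E_a)$ of $TM$; $s=\sum_{a,b}g(R(E_a,E_b)E_b,E_a)$; $s^*=\sum_{a,b}g(R(E_a,E_b)\varphi E_b,\varphi E_a)$; $\mathrm{Ric}(X,Y)=\sum_ag(R(X,E_a)E_a,Y)$; $s_{\mathfrak u(n)^\perp}=\sum_{a,b}g(R(E_a,E_b)_{\mathfrak u(n)^\perp}E_b,E_a)$; $s^{\rm alt}_{\mathfrak u(n)^\perp}=\sum_{a,b}g([\xi_{E_a},\xi_{E_b}]_{\mathfrak u(n)^\perp}E_b,E_a)$. With $\alpha(X,Y,Z)=g(\xi_XY,Z)$ and indices $i,j,k$ running over $1,\dots,2n$: $i_7=\sum_{j,k}\alpha(\zeta,e_j,e_k)\alpha(e_j,\zeta,e_k)$, $i_8=\sum_{i,j}\alpha(e_i,e_j,\zeta)\alpha(e_j,e_i,\zeta)$, $i_{10}=\sum_{i,j}\alpha(e_i,e_i,\zeta)\alpha(e_j,e_j,\zeta)$, $i_{12}=\sum_{i,j}\alpha(e_i,e_j,\zeta)\alpha(\varphi e_j,\varphi e_i,\zeta)$, $i_{14}=\sum_{i,j}\alpha(e_i,\varphi e_i,\zeta)\alpha(e_j,\varphi e_j,\zeta)$, $i_{17}=\sum_{i,k}\alpha(e_i,e_i,e_k)\alpha(\zeta,\zeta,e_k)$. *)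

theory Defs
  imports "HOL-Analysis.Analysis"
begin

text \<open>Local-coordinate model of an almost contact metric manifold.
  The metric is a matrix field G, the structure tensor phi a matrix field Phi,
  the Reeb field zeta a vector field Z.\<close>

fun Ck_on :: "nat \<Rightarrow> 'a::real_normed_vector set \<Rightarrow> ('a \<Rightarrow> 'b::real_normed_vector) \<Rightarrow> bool" where
  "Ck_on 0 S f = continuous_on S f"
| "Ck_on (Suc k) S f = (f differentiable_on S \<and>
      (\<forall>v. Ck_on k S (\<lambda>x. frechet_derivative f (at x) v)))"

definition smooth_on :: "'a::real_normed_vector set \<Rightarrow> ('a \<Rightarrow> 'b::real_normed_vector) \<Rightarrow> bool" where
  "smooth_on S f = (\<forall>k. Ck_on k S f)"

definition gp :: "(real^'m \<Rightarrow> real^'m^'m) \<Rightarrow> real^'m \<Rightarrow> real^'m \<Rightarrow> real^'m \<Rightarrow> real" where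
  "gp G p x y = x \<bullet> (G p *v y)"

definition riem_metric_on :: "(real^'m) set \<Rightarrow> (real^'m \<Rightarrow> real^'m^'m) \<Rightarrow> bool" where
  "riem_metric_on U G = (smooth_on U G \<and>
     (\<forall>p\<in>U. transpose (G p) = G p \<and> (\<forall>x. x \<noteq> 0 \<longrightarrow> gp G p x x > 0)))"

text \<open>Christoffel symbols: Gam p x y is the coordinate expression of nabla_x y for
  constant coordinate fields, determined by the Koszul formula.\<close>
definition Gam :: "(real^'m \<Rightarrow> real^'m^'m) \<Rightarrow> real^'m \<Rightarrow> real^'m \<Rightarrow> real^'m \<Rightarrow> real^'m" where
  "Gam G p x y = matrix_inv (G p) *v (\<chi> l.
      (1/2) * ( y \<bullet> (frechet_derivative G (at p) x *v axis l 1)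
              + x \<bullet> (frechet_derivative G (at p) y *v axis l 1)
              - x \<bullet> (frechet_derivative G (at p) (axis l 1) *v y)))"

definition covV :: "(real^'m \<Rightarrow> real^'m^'m) \<Rightarrow> real^'m \<Rightarrow> real^'m \<Rightarrow> (real^'m \<Rightarrow> real^'m) \<Rightarrow> real^'m" where
  "covV G p x Y = frechet_derivative Y (at p) x + Gam G p x (Y p)"

text \<open>Riemann curvature R(x,y)z = nabla_x nabla_y z - nabla_y nabla_x z - nabla_[x,y] z
  (evaluated on constant coordinate extensions, whose bracket vanishes).\<close>
definition Rm :: "(real^'m \<Rightarrow> real^'m^'m) \<Rightarrow> real^'m \<Rightarrow> real^'m \<Rightarrow> real^'m \<Rightarrow> real^'m \<Rightarrow> real^'m" where
  "Rm G p x y z =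
     frechet_derivative (\<lambda>q. Gam G q y z) (at p) x
   - frechet_derivative (\<lambda>q. Gam G q x z) (at p) y
   + Gam G p x (Gam G p y z) - Gam G p y (Gam G p x z)"

definition etaf :: "(real^'m \<Rightarrow> real^'m^'m) \<Rightarrow> (real^'m \<Rightarrow> real^'m) \<Rightarrow> real^'m \<Rightarrow> real^'m \<Rightarrow> real" where
  "etaf G Z p y = gp G p y (Z p)"

definition almost_contact_metric_on ::
  "(real^'m) set \<Rightarrow> (real^'m \<Rightarrow> real^'m^'m) \<Rightarrow> (real^'m \<Rightarrow> real^'m^'m) \<Rightarrow> (real^'m \<Rightarrow> real^'m) \<Rightarrow> bool" where
  "almost_contact_metric_on U G Phi Z = (open U \<and> riem_metric_on U G \<and> smooth_on U Phi \<and> smooth_on U Z \<and>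
     (\<forall>p\<in>U. gp G p (Z p) (Z p) = 1 \<and>
        (\<forall>x. Phi p *v (Phi p *v x) = - x + etaf G Z p x *\<^sub>R Z p) \<and>
        (\<forall>x y. gp G p (Phi p *v x) (Phi p *v y) = gp G p x y - etaf G Z p x * etaf G Z p y)))"

definition covPhi :: "(real^'m \<Rightarrow> real^'m^'m) \<Rightarrow> (real^'m \<Rightarrow> real^'m^'m) \<Rightarrow> real^'m \<Rightarrow> real^'m \<Rightarrow> real^'m \<Rightarrow> real^'m" where
  "covPhi G Phi p x y = frechet_derivative Phi (at p) x *v y
       + Gam G p x (Phi p *v y) - Phi p *v Gam G p x y"

text \<open>(nabla_x eta)(y) = x(eta(Y)) - eta(nabla_x Y) with Y the constant extension of y\<close>
definition covEta :: "(real^'m \<Rightarrow> real^'m^'m) \<Rightarrow> (real^'m \<Rightarrow> real^'m) \<Rightarrow> real^'m \<Rightarrow> real^'m \<Rightarrow> real^'m \<Rightarrow> real" where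
  "covEta G Z p x y = frechet_derivative (\<lambda>q. etaf G Z q y) (at p) x - etaf G Z p (Gam G p x y)"

definition xi :: "(real^'m \<Rightarrow> real^'m^'m) \<Rightarrow> (real^'m \<Rightarrow> real^'m^'m) \<Rightarrow> (real^'m \<Rightarrow> real^'m) \<Rightarrow> real^'m \<Rightarrow> real^'m \<Rightarrow> real^'m \<Rightarrow> real^'m" where
  "xi G Phi Z p x y = (1/2) *\<^sub>R covPhi G Phi p x (Phi p *v y)
       + ((1/2) * covEta G Z p x y) *\<^sub>R Z p
       - etaf G Z p y *\<^sub>R covV G p x Z"

definition alpha where
  "alpha G Phi Z p x y z = gp G p (xi G Phi Z p x y) z"

text \<open>Projection of an endomorphism of the tangent space onto u(n)-perp.\<close>
definition perp :: "(real^'m \<Rightarrow> real^'m^'m) \<Rightarrow> (real^'m \<Rightarrow> real^'m^'m) \<Rightarrow> (real^'m \<Rightarrow> real^'m) \<Rightarrow> real^'m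
      \<Rightarrow> (real^'m \<Rightarrow> real^'m) \<Rightarrow> real^'m \<Rightarrow> real^'m" where
  "perp G Phi Z p A v = (1/2) *\<^sub>R (A v + Phi p *v A (Phi p *v v)
       + etaf G Z p (A v) *\<^sub>R Z p + etaf G Z p v *\<^sub>R A (Z p))"

definition commut :: "('a \<Rightarrow> 'a::ab_group_add) \<Rightarrow> ('a \<Rightarrow> 'a) \<Rightarrow> 'a \<Rightarrow> 'a" where
  "commut A B v = A (B v) - B (A v)"

definition adapted_frame where
  "adapted_frame G Z p n (e :: nat \<Rightarrow> real^'m) =
     ((\<forall>i<2*n. \<forall>j<2*n. gp G p (e i) (e j) = (if i = j then 1 else 0)) \<and>
     (\<forall>i<2*n. etaf G Z p (e i) = 0))"

definition Efr :: "nat \<Rightarrow> (nat \<Rightarrow> real^'m) \<Rightarrow> real^'m \<Rightarrow> nat \<Rightarrow> real^'m" where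
  "Efr n e z a = (if a < 2*n then e a else z)"

definition scal where
  "scal G Z n e p = (\<Sum>a<2*n+1. \<Sum>b<2*n+1.
      gp G p (Rm G p (Efr n e (Z p) a) (Efr n e (Z p) b) (Efr n e (Z p) b)) (Efr n e (Z p) a))"

definition scal_star where
  "scal_star G Phi Z n e p = (\<Sum>a<2*n+1. \<Sum>b<2*n+1.
      gp G p (Rm G p (Efr n e (Z p) a) (Efr n e (Z p) b) (Phi p *v Efr n e (Z p) b))
             (Phi p *v Efr n e (Z p) a))"

definition Ric where
  "Ric G Z n e p x y = (\<Sum>a<2*n+1. gp G p (Rm G p x (Efr n e (Z p) a) (Efr n e (Z p) a)) y)"

definition scal_perp where
  "scal_perp G Phi Z n e p = (\<Sum>a<2*n+1. \<Sum>b<2*n+1.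
      gp G p (perp G Phi Z p (Rm G p (Efr n e (Z p) a) (Efr n e (Z p) b)) (Efr n e (Z p) b))
             (Efr n e (Z p) a))"

definition scal_alt_perp where
  "scal_alt_perp G Phi Z n e p = (\<Sum>a<2*n+1. \<Sum>b<2*n+1.
      gp G p (perp G Phi Z p (commut (xi G Phi Z p (Efr n e (Z p) a)) (xi G Phi Z p (Efr n e (Z p) b)))
                 (Efr n e (Z p) b))
             (Efr n e (Z p) a))"

definition i7 where
  "i7 G Phi Z n e p = (\<Sum>j<2*n. \<Sum>k<2*n.
      alpha G Phi Z p (Z p) (e j) (e k) * alpha G Phi Z p (e j) (Z p) (e k))"

definition i8 where
  "i8 G Phi Z n e p = (\<Sum>i<2*n. \<Sum>j<2*n.
      alpha G Phi Z p (e i) (e j) (Z p) * alpha G Phi Z p (e j) (e i) (Z p))"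

definition i10 where
  "i10 G Phi Z n e p = (\<Sum>i<2*n. \<Sum>j<2*n.
      alpha G Phi Z p (e i) (e i) (Z p) * alpha G Phi Z p (e j) (e j) (Z p))"

definition i12 where
  "i12 G Phi Z n e p = (\<Sum>i<2*n. \<Sum>j<2*n.
      alpha G Phi Z p (e i) (e j) (Z p) * alpha G Phi Z p (Phi p *v e j) (Phi p *v e i) (Z p))"

definition i14 where
  "i14 G Phi Z n e p = (\<Sum>i<2*n. \<Sum>j<2*n.
      alpha G Phi Z p (e i) (Phi p *v e i) (Z p) * alpha G Phi Z p (e j) (Phi p *v e j) (Z p))"

definition i17 where
  "i17 G Phi Z n e p = (\<Sum>i<2*n. \<Sum>k<2*n.
      alpha G Phi Z p (e i) (e i) (e k) * alpha G Phi Z p (Z p) (Z p) (e k))"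

end

theory Submission
  imports Defs
begin

text \<open>Both identities are linear algebra in the tangent space at \<open>p\<close> once three facts are
  available: every \<open>\<xi>\<^sub>X\<close> is \<open>g\<close>-skew, every \<open>\<xi>\<^sub>X\<close> is fixed by the projection onto
  \<open>u(n)\<^sup>\<bottom>\<close>, and every \<open>R(X,Y)\<close> is \<open>g\<close>-skew. Pairing the projection formula with an adapted
  frame turns a \<open>u(n)\<^sup>\<bottom>\<close>-trace into the full trace, minus its \<open>\<phi>\<close>-conjugate, plus two
  \<open>\<eta>\<close>-corrections. For \<open>R\<close> these are \<open>s\<close>, \<open>s\<^sup>*\<close> and, after moving \<open>\<zeta>\<close> between slots by
  skewness, twice \<open>Ric(\<zeta>,\<zeta>)\<close>. For \<open>[\<xi>\<^sub>a,\<xi>\<^sub>b]\<close>, skewness of \<open>\<xi>\<close> rewrites the traces through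
  \<open>\<Sum> g(\<xi>\<^sub>a E\<^sub>b, \<xi>\<^sub>b E\<^sub>a)\<close> and the squared norms of \<open>\<Sum> \<xi>\<^sub>a E\<^sub>a\<close> and \<open>\<Sum> \<xi>\<^sub>a \<phi>E\<^sub>a\<close>; splitting
  off the \<open>\<zeta>\<close>-direction and using \<open>\<xi>\<^sub>X \<phi> = -\<phi> \<xi>\<^sub>X\<close> modulo \<open>\<zeta>\<close> on \<open>ker \<eta>\<close> produces
  \<open>i\<^sub>7, \<dots>, i\<^sub>1\<^sub>7\<close>. In coordinates the skewness of \<open>R\<close> rests on the symmetry of the second
  derivatives of the metric, which follows from the mean value inequality.\<close>

section \<open>Symmetry of second derivatives\<close>

lemma norm_deviation_from_linear_le:
  fixes f :: "real \<Rightarrow> 'b::real_normed_vector"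
  assumes "0 \<le> h"
    and der: "\<And>t. t \<in> {0..h} \<Longrightarrow> (f has_vector_derivative f' t) (at t within {0..h})"
    and bound: "\<And>t. t \<in> {0..h} \<Longrightarrow> norm (f' t - w) \<le> B"
  shows "norm (f h - f 0 - h *\<^sub>R w) \<le> B * h"
proof -
  define F where "F t = f t - t *\<^sub>R w" for t
  have "(F has_derivative (\<lambda>s. s *\<^sub>R (f' t - w))) (at t within {0..h})" if "t \<in> {0..h}" for t
    using der[OF that] unfolding F_def has_vector_derivative_def
    by (auto intro!: derivative_eq_intros simp: scaleR_diff_right)
  moreover have "onorm (\<lambda>s::real. s *\<^sub>R (f' t - w)) \<le> B" if "t \<in> {0..h}" for t
    using bound[OF that] by (simp add: onorm_scaleR_left onorm_id)
  ultimately have "norm (F h - F 0) \<le> B * norm (h - 0)"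
    using \<open>0 \<le> h\<close> by (intro differentiable_bound[of "{0..h}" F]) auto
  then show ?thesis using \<open>0 \<le> h\<close> by (simp add: F_def algebra_simps)
qed

lemma second_difference_approx:
  fixes f :: "'a::real_normed_vector \<Rightarrow> 'b::real_normed_vector"
  assumes "open S" "p \<in> S"
    and df: "\<And>q. q \<in> S \<Longrightarrow> f differentiable (at q)"
    and ddf: "(\<lambda>q. frechet_derivative f (at q) x) differentiable (at p)"
    and "e > 0"
  shows "\<exists>h0>0. \<forall>h. 0 < h \<and> h < h0 \<longrightarrow>
     norm (f (p + h *\<^sub>R x + h *\<^sub>R y) - f (p + h *\<^sub>R x) - f (p + h *\<^sub>R y) + f p
           - (h * h) *\<^sub>R frechet_derivative (\<lambda>q. frechet_derivative f (at q) x) (at p) y) \<le> e * (h * h)"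
proof -
  define H where "H q = frechet_derivative f (at q) x" for q
  define L where "L = frechet_derivative H (at p)"
  have HL: "(H has_derivative L) (at p)"
    using ddf unfolding H_def L_def by (simp add: frechet_derivative_works)
  then have "linear L" using has_derivative_linear by blast
  define C where "C = 2 * norm x + norm y + 1"
  have "C > 0" unfolding C_def by (simp add: add_nonneg_pos)
  obtain d where "d > 0"
    and d: "\<And>u. norm (u - p) < d \<Longrightarrow> norm (H u - H p - L (u - p)) \<le> (e / C) * norm (u - p)"
    using HL \<open>e > 0\<close> \<open>C > 0\<close> unfolding has_derivative_at_alt by (metis divide_pos_pos)
  obtain r where "r > 0" "ball p r \<subseteq> S" using assms(1,2) open_contains_ball by blast
  show ?thesis
  proof (intro exI conjI allI impI)
    show "min d r / C > 0" using \<open>d > 0\<close> \<open>r > 0\<close> \<open>C > 0\<close> by simp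
    fix h :: real assume h: "0 < h \<and> h < min d r / C"
    then have "h * C < min d r" using \<open>C > 0\<close> by (simp add: pos_less_divide_eq)
    moreover have "h * (norm x + norm y) \<le> h * C" "h * norm x \<le> h * C"
      using h by (auto intro!: mult_left_mono simp: C_def)
    ultimately have small: "h * (norm x + norm y) < min d r" "h * norm x < min d r" by linarith+
    have nx: "norm (t *\<^sub>R x) \<le> h * norm x" if "t \<in> {0..h}" for t
      using that by (simp add: mult_right_mono)
    have nxy: "norm (t *\<^sub>R x + h *\<^sub>R y) \<le> h * (norm x + norm y)" if "t \<in> {0..h}" for t
      using norm_triangle_ineq[of "t *\<^sub>R x" "h *\<^sub>R y"] nx[OF that] h by (simp add: algebra_simps)
    have inS: "p + t *\<^sub>R x + h *\<^sub>R y \<in> S" "p + t *\<^sub>R x \<in> S" if "t \<in> {0..h}" for t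
    proof -
      have dist_p: "dist p (p + u) = norm u" for u by (simp add: dist_norm)
      have "dist p (p + (t *\<^sub>R x + h *\<^sub>R y)) < r" "dist p (p + t *\<^sub>R x) < r"
        unfolding dist_p using nxy[OF that] nx[OF that] small by linarith+
      then show "p + t *\<^sub>R x + h *\<^sub>R y \<in> S" "p + t *\<^sub>R x \<in> S"
        using \<open>ball p r \<subseteq> S\<close> by (auto simp: add.assoc)
    qed
    have line_deriv: "((\<lambda>t. f (q + t *\<^sub>R x)) has_vector_derivative H (q + t *\<^sub>R x)) (at t within {0..h})"
      if "q + t *\<^sub>R x \<in> S" for q t
    proof -
      have "((\<lambda>t. q + t *\<^sub>R x) has_derivative (\<lambda>s. s *\<^sub>R x)) (at t within {0..h})"
        by (auto intro!: derivative_eq_intros)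
      moreover have "(f has_derivative frechet_derivative f (at (q + t *\<^sub>R x))) (at (q + t *\<^sub>R x))"
        using df[OF that] by (simp add: frechet_derivative_works)
      ultimately have "((\<lambda>t. f (q + t *\<^sub>R x)) has_derivative
           (\<lambda>s. frechet_derivative f (at (q + t *\<^sub>R x)) (s *\<^sub>R x))) (at t within {0..h})"
        by (rule has_derivative_compose)
      then show ?thesis
        using linear_frechet_derivative[OF df[OF that]]
        unfolding has_vector_derivative_def H_def by (simp add: linear_scale)
    qed
    define \<psi> where "\<psi> t = f (p + t *\<^sub>R x + h *\<^sub>R y) - f (p + t *\<^sub>R x)" for t
    define \<psi>' where "\<psi>' t = H (p + t *\<^sub>R x + h *\<^sub>R y) - H (p + t *\<^sub>R x)" for t
    have "(\<psi> has_vector_derivative \<psi>' t) (at t within {0..h})" if "t \<in> {0..h}" for t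
    proof -
      have "((\<lambda>t. f ((p + h *\<^sub>R y) + t *\<^sub>R x)) has_vector_derivative H ((p + h *\<^sub>R y) + t *\<^sub>R x))
          (at t within {0..h})"
        by (rule line_deriv) (use inS(1)[OF that] in \<open>simp add: algebra_simps\<close>)
      from has_vector_derivative_diff[OF this line_deriv[OF inS(2)[OF that]]] show ?thesis
        unfolding \<psi>_def \<psi>'_def by (simp add: algebra_simps)
    qed
    moreover have "norm (\<psi>' t - h *\<^sub>R L y) \<le> e * h" if "t \<in> {0..h}" for t
    proof -
      let ?u1 = "t *\<^sub>R x + h *\<^sub>R y" and ?u2 = "t *\<^sub>R x"
      have "\<psi>' t - h *\<^sub>R L y = (H (p + ?u1) - H p - L ?u1) - (H (p + ?u2) - H p - L ?u2)"
        unfolding \<psi>'_def using \<open>linear L\<close> by (simp add: linear_add linear_scale algebra_simps)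
      then have "norm (\<psi>' t - h *\<^sub>R L y)
          \<le> norm (H (p + ?u1) - H p - L ?u1) + norm (H (p + ?u2) - H p - L ?u2)"
        by (metis norm_triangle_ineq4)
      also have "\<dots> \<le> (e / C) * norm ?u1 + (e / C) * norm ?u2"
        using d[of "p + ?u1"] d[of "p + ?u2"] nxy[OF that] nx[OF that] small
        by (intro add_mono) simp_all
      also have "\<dots> \<le> (e / C) * (h * (norm x + norm y)) + (e / C) * (h * norm x)"
        using nxy[OF that] nx[OF that] \<open>e > 0\<close> \<open>C > 0\<close> by (intro add_mono mult_left_mono) auto
      also have "\<dots> = (e / C) * h * (2 * norm x + norm y)" by (simp add: algebra_simps)
      also have "\<dots> \<le> (e / C) * h * C"
        using \<open>e > 0\<close> \<open>C > 0\<close> h unfolding C_def by (intro mult_left_mono) auto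
      finally show ?thesis using \<open>C > 0\<close> by simp
    qed
    ultimately have "norm (\<psi> h - \<psi> 0 - h *\<^sub>R (h *\<^sub>R L y)) \<le> (e * h) * h"
      using h by (intro norm_deviation_from_linear_le) auto
    then show "norm (f (p + h *\<^sub>R x + h *\<^sub>R y) - f (p + h *\<^sub>R x) - f (p + h *\<^sub>R y) + f p
           - (h * h) *\<^sub>R frechet_derivative (\<lambda>q. frechet_derivative f (at q) x) (at p) y) \<le> e * (h * h)"
      unfolding \<psi>_def L_def H_def by (simp add: algebra_simps)
  qed
qed

text \<open>Both mixed derivatives are the limit of the same second difference
  \<open>(f(p+hx+hy) - f(p+hx) - f(p+hy) + f p) / h\<^sup>2\<close>.\<close>

lemma second_frechet_derivative_symmetric:
  fixes f :: "'a::real_normed_vector \<Rightarrow> 'b::real_normed_vector"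
  assumes S: "open S" "p \<in> S"
    and df: "\<And>q. q \<in> S \<Longrightarrow> f differentiable (at q)"
    and ddx: "(\<lambda>q. frechet_derivative f (at q) x) differentiable (at p)"
    and ddy: "(\<lambda>q. frechet_derivative f (at q) y) differentiable (at p)"
  shows "frechet_derivative (\<lambda>q. frechet_derivative f (at q) x) (at p) y =
         frechet_derivative (\<lambda>q. frechet_derivative f (at q) y) (at p) x"
proof -
  define A where "A = frechet_derivative (\<lambda>q. frechet_derivative f (at q) x) (at p) y"
  define B where "B = frechet_derivative (\<lambda>q. frechet_derivative f (at q) y) (at p) x"
  define D where "D h = f (p + h *\<^sub>R x + h *\<^sub>R y) - f (p + h *\<^sub>R x) - f (p + h *\<^sub>R y) + f p" for h
  have D_swap: "f (p + h *\<^sub>R y + h *\<^sub>R x) - f (p + h *\<^sub>R y) - f (p + h *\<^sub>R x) + f p = D h" for h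
    unfolding D_def by (simp add: algebra_simps)
  have "norm (A - B) \<le> 2 * e" if "e > 0" for e
  proof -
    obtain h1 where "h1 > 0" and h1: "\<And>h. 0 < h \<and> h < h1 \<Longrightarrow> norm (D h - (h * h) *\<^sub>R A) \<le> e * (h * h)"
      using second_difference_approx[OF S df ddx \<open>e > 0\<close>, of y] unfolding D_def A_def by blast
    obtain h2 where "h2 > 0" and h2: "\<And>h. 0 < h \<and> h < h2 \<Longrightarrow> norm (D h - (h * h) *\<^sub>R B) \<le> e * (h * h)"
      using second_difference_approx[OF S df ddy \<open>e > 0\<close>, of x] unfolding B_def D_swap by blast
    define h where "h = min h1 h2 / 2"
    have h: "0 < h" "h < h1" "h < h2" using \<open>h1 > 0\<close> \<open>h2 > 0\<close> unfolding h_def by auto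
    have "norm ((h * h) *\<^sub>R (A - B)) = norm ((D h - (h * h) *\<^sub>R B) - (D h - (h * h) *\<^sub>R A))"
      by (simp add: algebra_simps)
    also have "\<dots> \<le> norm (D h - (h * h) *\<^sub>R B) + norm (D h - (h * h) *\<^sub>R A)"
      by (rule norm_triangle_ineq4)
    also have "\<dots> \<le> e * (h * h) + e * (h * h)"
      using h1[of h] h2[of h] h by (intro add_mono) auto
    finally show ?thesis using h by (simp add: mult.commute)
  qed
  from this[of "norm (A - B) / 4"] have "A = B" by (cases "A = B") auto
  then show ?thesis unfolding A_def B_def .
qed

section \<open>Matrix metrics and Christoffel symbols\<close>

lemma inner_matrix_vector_transpose: "(x::real^'n) \<bullet> (A *v y) = (transpose A *v x) \<bullet> y"
  by (simp add: dot_lmul_matrix)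

lemma inner_symmetric_matrix_commute: "transpose A = A \<Longrightarrow> (x::real^'n) \<bullet> (A *v y) = y \<bullet> (A *v x)"
  by (metis inner_matrix_vector_transpose inner_commute)

lemma matrix_vector_mult_sum_left: "(\<Sum>i\<in>I. A i) *v (y::real^'n) = (\<Sum>i\<in>I. A i *v y)"
  by (induction I rule: infinite_finite_induct) (auto simp: matrix_vector_mult_add_rdistrib)

lemma matrix_vector_mult_sum_right: "(A::real^'n^'m) *v (\<Sum>i\<in>I. f i) = (\<Sum>i\<in>I. A *v f i)"
  by (induction I rule: infinite_finite_induct) (simp_all add: matrix_vector_right_distrib)

lemma matrix_vector_mult_minus_right [simp]: "(A::real^'n^'m) *v (- v) = - (A *v v)"
  using matrix_vector_mult_scaleR[of A "-1" v] by simp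

lemma scaleR_matrix_vector_mult_left: "(c *\<^sub>R A) *v (y::real^'n) = c *\<^sub>R (A *v y)"
  by (simp add: scaleR_matrix_vector_assoc)

lemma vector_axis_expansion: "(z::real^'n) = (\<Sum>l\<in>UNIV. z $ l *\<^sub>R axis l 1)"
  using basis_expansion[of z] by (simp add: scalar_mult_eq_scaleR)

lemma linear_axis_expansion: "linear f \<Longrightarrow> f (z::real^'n) = (\<Sum>l\<in>UNIV. z $ l *\<^sub>R f (axis l 1))"
  by (subst vector_axis_expansion) (simp add: linear_sum linear_scale)

lemma sum_component_inner_axis: "(\<Sum>l\<in>UNIV. (z::real^'n) $ l * (y \<bullet> axis l 1)) = y \<bullet> z"
  by (subst (2) vector_axis_expansion) (simp add: inner_sum_right mult.commute)

lemma matrix_inv_inverse: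
  "invertible (A::real^'n^'n) \<Longrightarrow> A ** matrix_inv A = mat 1 \<and> matrix_inv A ** A = mat 1"
  unfolding invertible_def matrix_inv_def by (rule someI_ex)

lemma posdef_matrix_invertible:
  assumes "\<forall>x. x \<noteq> 0 \<longrightarrow> (x::real^'n) \<bullet> (A *v x) > 0"
  shows "invertible A"
proof -
  have "inj ((*v) A)"
  proof (rule injI)
    fix x y assume "A *v x = A *v y"
    then have "(x - y) \<bullet> (A *v (x - y)) = 0" by (simp add: matrix_vector_mult_diff_distrib)
    then show "x = y" using assms by (metis less_irrefl eq_iff_diff_eq_0)
  qed
  then show ?thesis using invertible_left_inverse matrix_left_invertible_injective by blast
qed

lemma gp_add_left [simp]: "gp G p (x + y) z = gp G p x z + gp G p y z"
  by (simp add: gp_def inner_add_left)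
lemma gp_add_right [simp]: "gp G p z (x + y) = gp G p z x + gp G p z y"
  by (simp add: gp_def matrix_vector_right_distrib inner_add_right)
lemma gp_diff_left [simp]: "gp G p (x - y) z = gp G p x z - gp G p y z"
  by (simp add: gp_def inner_diff_left)
lemma gp_diff_right [simp]: "gp G p z (x - y) = gp G p z x - gp G p z y"
  by (simp add: gp_def matrix_vector_mult_diff_distrib inner_diff_right)
lemma gp_minus_left [simp]: "gp G p (- x) z = - gp G p x z"
  by (simp add: gp_def)
lemma gp_minus_right [simp]: "gp G p z (- x) = - gp G p z x"
  by (simp add: gp_def)
lemma gp_scaleR_left [simp]: "gp G p (c *\<^sub>R x) z = c * gp G p x z"
  by (simp add: gp_def)
lemma gp_scaleR_right [simp]: "gp G p z (c *\<^sub>R x) = c * gp G p z x"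
  by (simp add: gp_def matrix_vector_mult_scaleR)
lemma gp_zero_left [simp]: "gp G p 0 z = 0"
  by (simp add: gp_def)
lemma gp_zero_right [simp]: "gp G p z 0 = 0"
  by (simp add: gp_def)
lemma gp_sum_left: "gp G p (\<Sum>i\<in>I. f i) z = (\<Sum>i\<in>I. gp G p (f i) z)"
  by (induction I rule: infinite_finite_induct) auto
lemma gp_sum_right: "gp G p z (\<Sum>i\<in>I. f i) = (\<Sum>i\<in>I. gp G p z (f i))"
  by (induction I rule: infinite_finite_induct) auto

lemma gp_sum_sum: "gp G p (\<Sum>a\<in>A. f a) (\<Sum>b\<in>B. h b) = (\<Sum>a\<in>A. \<Sum>b\<in>B. gp G p (f a) (h b))"
  by (unfold gp_sum_left, unfold gp_sum_right) (rule refl)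

lemma gp_commute: "transpose (G q) = G q \<Longrightarrow> gp G q x y = gp G q y x"
  unfolding gp_def by (rule inner_symmetric_matrix_commute)

lemma gp_eq_imp_eq:
  assumes "\<forall>x. x \<noteq> 0 \<longrightarrow> gp G q x x > 0" "\<And>z. gp G q a z = gp G q b z"
  shows "a = b"
proof -
  have "gp G q (a - b) (a - b) = 0" using assms(2)[of "a - b"] by simp
  then show ?thesis using assms(1) by (metis eq_iff_diff_eq_0 less_irrefl)
qed

lemma etaf_scaleR [simp]: "etaf G Z q (c *\<^sub>R v) = c * etaf G Z q v"
  by (simp add: etaf_def)
lemma etaf_add [simp]: "etaf G Z q (u + v) = etaf G Z q u + etaf G Z q v"
  by (simp add: etaf_def)
lemma etaf_diff [simp]: "etaf G Z q (u - v) = etaf G Z q u - etaf G Z q v"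
  by (simp add: etaf_def)
lemma etaf_minus [simp]: "etaf G Z q (- v) = - etaf G Z q v"
  by (simp add: etaf_def)
lemma etaf_zero [simp]: "etaf G Z q 0 = 0"
  by (simp add: etaf_def)

lemma gp_Gam_Koszul:
  fixes G :: "real^'m \<Rightarrow> real^'m^'m"
  assumes sym: "transpose (G q) = G q" and inv: "invertible (G q)"
    and lin: "linear (frechet_derivative G (at q))"
  shows "gp G q (Gam G q x y) z = (1/2) * (y \<bullet> (frechet_derivative G (at q) x *v z)
            + x \<bullet> (frechet_derivative G (at q) y *v z) - x \<bullet> (frechet_derivative G (at q) z *v y))"
proof -
  define D where "D = frechet_derivative G (at q)"
  define K where "K = (\<chi> l. (1/2) * (y \<bullet> (D x *v axis l 1) + x \<bullet> (D y *v axis l 1)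
              - x \<bullet> (D (axis l 1) *v y)))"
  have pair_axis: "(\<Sum>l\<in>UNIV. z $ l * (u \<bullet> (M *v axis l 1))) = u \<bullet> (M *v z)" for u and M :: "real^'m^'m"
    using sum_component_inner_axis[of z "transpose M *v u"]
    by (simp add: inner_matrix_vector_transpose)
  have "gp G q (Gam G q x y) z = (matrix_inv (G q) *v K) \<bullet> (G q *v z)"
    unfolding gp_def Gam_def K_def D_def ..
  also have "\<dots> = (G q *v (matrix_inv (G q) *v K)) \<bullet> z"
    by (metis inner_matrix_vector_transpose inner_commute sym)
  also have "\<dots> = K \<bullet> z"
    using matrix_inv_inverse[OF inv] by (simp add: matrix_vector_mul_assoc)
  also have "\<dots> = (1/2) * ((\<Sum>l\<in>UNIV. z $ l * (y \<bullet> (D x *v axis l 1)))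
        + (\<Sum>l\<in>UNIV. z $ l * (x \<bullet> (D y *v axis l 1))) - (\<Sum>l\<in>UNIV. z $ l * (x \<bullet> (D (axis l 1) *v y))))"
    unfolding K_def inner_vec_def
    by (simp add: sum_distrib_left sum.distrib sum_subtractf algebra_simps)
  also have "(\<Sum>l\<in>UNIV. z $ l * (x \<bullet> (D (axis l 1) *v y))) = x \<bullet> (D z *v y)"
  proof -
    have "D z *v y = (\<Sum>l\<in>UNIV. z $ l *\<^sub>R (D (axis l 1) *v y))"
      using linear_axis_expansion[OF lin, of z] unfolding D_def[symmetric]
      by (simp add: matrix_vector_mult_sum_left scaleR_matrix_vector_mult_left)
    then show ?thesis by (simp add: inner_sum_right)
  qed
  finally show ?thesis unfolding pair_axis D_def .
qed

lemma Gam_metric_compatible: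
  fixes G :: "real^'m \<Rightarrow> real^'m^'m"
  assumes sym: "transpose (G q) = G q" and inv: "invertible (G q)"
    and lin: "linear (frechet_derivative G (at q))"
    and dsym: "\<And>v. transpose (frechet_derivative G (at q) v) = frechet_derivative G (at q) v"
  shows "gp G q (Gam G q x y) z + gp G q y (Gam G q x z) = y \<bullet> (frechet_derivative G (at q) x *v z)"
  using gp_Gam_Koszul[OF sym inv lin, of x y z] gp_Gam_Koszul[OF sym inv lin, of x z y]
    gp_commute[of G q, OF sym, of y "Gam G q x z"] inner_symmetric_matrix_commute[OF dsym, of y x z]
    inner_symmetric_matrix_commute[OF dsym, of x z y] inner_symmetric_matrix_commute[OF dsym, of x y z]
  by (simp add: algebra_simps)

section \<open>Differentiability in coordinates\<close>

lemma bounded_bilinear_matrix_vector_mult: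
  "bounded_bilinear (\<lambda>(A::real^'n^'m) (x::real^'n). A *v x)"
proof -
  have "bilinear (\<lambda>(A::real^'n^'m) (x::real^'n). A *v x)"
    unfolding bilinear_def
    by (auto intro!: linearI simp: matrix_vector_right_distrib matrix_vector_mult_scaleR
        matrix_vector_mult_add_rdistrib scaleR_matrix_vector_mult_left)
  then show ?thesis using bilinear_conv_bounded_bilinear by blast
qed

lemma has_derivative_matrix_vector_mult:
  fixes M :: "'a::real_normed_vector \<Rightarrow> real^'n^'m" and v :: "'a \<Rightarrow> real^'n"
  assumes "(M has_derivative M') (at x)" "(v has_derivative v') (at x)"
  shows "((\<lambda>q. M q *v v q) has_derivative (\<lambda>h. M x *v v' h + M' h *v v x)) (at x)"
  using bounded_bilinear.FDERIV[OF bounded_bilinear_matrix_vector_mult assms] .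

lemma has_derivative_gp:
  fixes G :: "real^'m \<Rightarrow> real^'m^'m"
  assumes "(G has_derivative G') (at x)" "(A has_derivative A') (at x)" "(B has_derivative B') (at x)"
  shows "((\<lambda>q. gp G q (A q) (B q)) has_derivative
     (\<lambda>h. A' h \<bullet> (G x *v B x) + A x \<bullet> (G' h *v B x) + A x \<bullet> (G x *v B' h))) (at x)"
  using has_derivative_inner[OF assms(2) has_derivative_matrix_vector_mult[OF assms(1,3)]]
  unfolding gp_def by (simp add: inner_add_right algebra_simps)

lemma has_derivative_eq_on_open:
  assumes "(F has_derivative F') (at p)" "(H has_derivative H') (at p)" "open U" "p \<in> U"
    "\<And>r. r \<in> U \<Longrightarrow> F r = H r"
  shows "F' = H'"
proof -
  have "(F has_derivative H') (at p)"
    by (rule has_derivative_transform_within_open[OF assms(2) assms(3,4)]) (use assms(5) in auto)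
  then show ?thesis using assms(1) has_derivative_unique by blast
qed

lemma smooth_on_frechet_derivative:
  "smooth_on S f \<Longrightarrow> smooth_on S (\<lambda>x. frechet_derivative f (at x) v)"
  unfolding smooth_on_def by (metis Ck_on.simps(2))

lemma smooth_on_differentiable_at:
  "smooth_on S f \<Longrightarrow> open S \<Longrightarrow> q \<in> S \<Longrightarrow> f differentiable (at q)"
  unfolding smooth_on_def by (metis Ck_on.simps(2) differentiable_on_eq_differentiable_at)

lemma smooth_on_has_derivative:
  "smooth_on S f \<Longrightarrow> open S \<Longrightarrow> q \<in> S \<Longrightarrow> (f has_derivative frechet_derivative f (at q)) (at q)"
  using smooth_on_differentiable_at frechet_derivative_works by blast

lemma smooth_on_linear_derivative:
  "smooth_on S f \<Longrightarrow> open S \<Longrightarrow> q \<in> S \<Longrightarrow> linear (frechet_derivative f (at q))"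
  using smooth_on_differentiable_at linear_frechet_derivative by blast

lemma bounded_linear_transpose: "bounded_linear (transpose :: real^'n^'m \<Rightarrow> real^'m^'n)"
proof -
  have "linear (transpose :: real^'n^'m \<Rightarrow> real^'m^'n)"
    by (rule linearI) (simp_all add: transpose_def vec_eq_iff)
  then show ?thesis using linear_conv_bounded_linear by blast
qed

lemma frechet_derivative_symmetric_matrix:
  fixes G :: "real^'m \<Rightarrow> real^'m^'m"
  assumes "open S" "q \<in> S" "\<And>r. r \<in> S \<Longrightarrow> transpose (G r) = G r" "G differentiable (at q)"
  shows "transpose (frechet_derivative G (at q) v) = frechet_derivative G (at q) v"
proof -
  have "(G has_derivative frechet_derivative G (at q)) (at q)"
    using assms(4) frechet_derivative_works by blast
  from bounded_linear.has_derivative[OF bounded_linear_transpose this]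
  have "(G has_derivative (\<lambda>h. transpose (frechet_derivative G (at q) h))) (at q)"
    by (rule has_derivative_transform_within_open[OF _ assms(1,2)]) (use assms(3) in auto)
  then have "(\<lambda>h. transpose (frechet_derivative G (at q) h)) = frechet_derivative G (at q)"
    by (rule frechet_derivative_at)
  then show ?thesis by metis
qed

lemma differentiable_vec_nth:
  "f differentiable (at p) \<Longrightarrow> (\<lambda>q. f q $ k) differentiable (at p)"
  by (rule differentiable_compose[OF bounded_linear_imp_differentiable[OF bounded_linear_vec_nth]])

lemma differentiable_euclidean_componentwise:
  fixes f :: "'a::real_normed_vector \<Rightarrow> 'b::euclidean_space"
  assumes "\<And>b. b \<in> Basis \<Longrightarrow> (\<lambda>q. f q \<bullet> b) differentiable (at p)"
  shows "f differentiable (at p)"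
proof -
  have "(\<lambda>q. \<Sum>b\<in>Basis. (f q \<bullet> b) *\<^sub>R b) differentiable (at p)"
    using assms by (intro differentiable_sum) auto
  then show ?thesis by (simp add: euclidean_representation)
qed

lemma differentiable_vec_componentwise:
  fixes f :: "'a::real_normed_vector \<Rightarrow> real^'n"
  assumes "\<And>k. (\<lambda>q. f q $ k) differentiable (at p)"
  shows "f differentiable (at p)"
proof (rule differentiable_euclidean_componentwise)
  fix b :: "real^'n" assume "b \<in> Basis"
  then obtain k where "b = axis k 1" unfolding Basis_vec_def by auto
  then show "(\<lambda>q. f q \<bullet> b) differentiable (at p)" using assms[of k] by (simp add: inner_axis)
qed

lemma differentiable_matrix_entrywise:
  fixes f :: "'a::real_normed_vector \<Rightarrow> real^'n^'m"
  assumes "\<And>i j. (\<lambda>q. f q $ i $ j) differentiable (at p)"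
  shows "f differentiable (at p)"
proof (rule differentiable_euclidean_componentwise)
  fix b :: "real^'n^'m" assume "b \<in> Basis"
  then obtain i j where "b = axis i (axis j 1)" unfolding Basis_vec_def by auto
  then show "(\<lambda>q. f q \<bullet> b) differentiable (at p)" using assms[of i j] by (simp add: inner_axis)
qed

lemma differentiable_prod:
  fixes f :: "'i \<Rightarrow> 'a::real_normed_vector \<Rightarrow> real"
  shows "finite I \<Longrightarrow> (\<And>i. i \<in> I \<Longrightarrow> f i differentiable (at p))
    \<Longrightarrow> (\<lambda>q. \<Prod>i\<in>I. f i q) differentiable (at p)"
  by (induction I rule: finite_induct) (simp_all add: differentiable_mult)

lemma differentiable_det:
  fixes M :: "'a::real_normed_vector \<Rightarrow> real^'n^'n"
  assumes "M differentiable (at p)"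
  shows "(\<lambda>q. det (M q)) differentiable (at p)"
proof -
  have "(\<lambda>q. M q $ i $ j) differentiable (at p)" for i j
    using differentiable_vec_nth[OF differentiable_vec_nth[OF assms]] .
  then show ?thesis unfolding det_def
    by (intro differentiable_sum ballI differentiable_mult differentiable_prod finite_UNIV) auto
qed

text \<open>The Christoffel symbols are differentiable because, by Cramer's rule, they are quotients of
  determinants built from \<open>G\<close> and its first derivatives.\<close>

lemma Gam_differentiable:
  fixes G :: "real^'m \<Rightarrow> real^'m^'m"
  assumes U: "open U" "p \<in> U" and "smooth_on U G" and inv: "\<And>q. q \<in> U \<Longrightarrow> invertible (G q)"
  shows "(\<lambda>q. Gam G q x y) differentiable (at p)"
proof -
  define K where "K q = (\<chi> l. (1/2) * (y \<bullet> (frechet_derivative G (at q) x *v axis l 1)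
              + x \<bullet> (frechet_derivative G (at q) y *v axis l 1)
              - x \<bullet> (frechet_derivative G (at q) (axis l 1) *v y)))" for q
  define C :: "real^'m \<Rightarrow> 'm \<Rightarrow> real^'m^'m"
    where "C q k = (\<chi> i j. if j = k then K q $ i else G q $ i $ j)" for q k
  have dG: "G differentiable (at p)"
    using smooth_on_differentiable_at[OF \<open>smooth_on U G\<close> U] .
  have dDG: "(\<lambda>q. frechet_derivative G (at q) v) differentiable (at p)" for v
    using smooth_on_differentiable_at[OF smooth_on_frechet_derivative[OF \<open>smooth_on U G\<close>] U] .
  have "(\<lambda>q. frechet_derivative G (at q) v *v a) differentiable (at p)" for v a
    using differentiable_compose[OF bounded_linear_imp_differentiable[OF
        bounded_bilinear.bounded_linear_left[OF bounded_bilinear_matrix_vector_mult]] dDG]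
    by simp
  then have dK: "(\<lambda>q. K q $ k) differentiable (at p)" for k
    unfolding K_def by (simp add: differentiable_inner)
  have "(\<lambda>q. \<chi> k. det (C q k) / det (G q)) differentiable (at p)"
  proof (rule differentiable_vec_componentwise)
    fix k
    have dC: "(\<lambda>q. C q k) differentiable (at p)"
    proof (rule differentiable_matrix_entrywise)
      fix i j
      show "(\<lambda>q. C q k $ i $ j) differentiable (at p)"
        unfolding C_def using differentiable_vec_nth[OF differentiable_vec_nth[OF dG]] dK
        by (cases "j = k") auto
    qed
    show "(\<lambda>q. (\<chi> k. det (C q k) / det (G q)) $ k) differentiable (at p)"
      using differentiable_divide[OF differentiable_det[OF dC] differentiable_det[OF dG]
          invertible_det_nz[THEN iffD1, OF inv[OF U(2)]]] by simp
  qed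
  then obtain D where "((\<lambda>q. \<chi> k. det (C q k) / det (G q)) has_derivative D) (at p)"
    unfolding differentiable_def by blast
  moreover have "(\<chi> k. det (C q k) / det (G q)) = Gam G q x y" if "q \<in> U" for q
  proof -
    have "G q *v Gam G q x y = K q"
      unfolding Gam_def K_def using matrix_inv_inverse[OF inv[OF that]]
      by (simp add: matrix_vector_mul_assoc)
    then show ?thesis
      unfolding C_def cramer[OF invertible_det_nz[THEN iffD1, OF inv[OF that]]] by (rule sym)
  qed
  ultimately have "((\<lambda>q. Gam G q x y) has_derivative D) (at p)"
    by (rule has_derivative_transform_within_open[OF _ U])
  then show ?thesis unfolding differentiable_def by blast
qed

section \<open>The metric at a point\<close>

locale riemannian_point =
  fixes U :: "(real^'m) set" and G :: "real^'m \<Rightarrow> real^'m^'m" and p :: "real^'m"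
  assumes open_U: "open U" and metric: "riem_metric_on U G" and p_in_U: "p \<in> U"
begin

abbreviation "g \<equiv> gp G p"
abbreviation "DG \<equiv> frechet_derivative G (at p)"

lemma smooth_G: "smooth_on U G"
  using metric unfolding riem_metric_on_def by simp
lemma G_symmetric: "r \<in> U \<Longrightarrow> transpose (G r) = G r"
  using metric unfolding riem_metric_on_def by simp
lemma G_posdef: "r \<in> U \<Longrightarrow> \<forall>x. x \<noteq> 0 \<longrightarrow> gp G r x x > 0"
  using metric unfolding riem_metric_on_def by simp
lemma G_invertible: "r \<in> U \<Longrightarrow> invertible (G r)"
  using G_posdef[of r] posdef_matrix_invertible unfolding gp_def by blast

lemma DG_symmetric: "r \<in> U \<Longrightarrow> transpose (frechet_derivative G (at r) v) = frechet_derivative G (at r) v"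
  using frechet_derivative_symmetric_matrix[OF open_U _ G_symmetric smooth_on_differentiable_at[OF smooth_G open_U]]
  by blast

lemma Gam_compatible:
  "r \<in> U \<Longrightarrow> gp G r (Gam G r x y) z + gp G r y (Gam G r x z) = y \<bullet> (frechet_derivative G (at r) x *v z)"
  using Gam_metric_compatible[OF G_symmetric G_invertible smooth_on_linear_derivative[OF smooth_G open_U] DG_symmetric]
  by blast

lemma g_commute: "g x y = g y x"
  using gp_commute[of G p, OF G_symmetric[OF p_in_U]] .

lemma g_eq_imp_eq: "(\<And>z. g a z = g b z) \<Longrightarrow> a = b"
  using gp_eq_imp_eq[OF G_posdef[OF p_in_U]] by blast

lemma G_has_derivative: "(G has_derivative DG) (at p)"
  using smooth_on_has_derivative[OF smooth_G open_U p_in_U] .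

lemma linear_DG: "linear DG"
  using smooth_on_linear_derivative[OF smooth_G open_U p_in_U] .

lemma g_Gam_Koszul:
  "g (Gam G p x y) z = (1/2) * (y \<bullet> (DG x *v z) + x \<bullet> (DG y *v z) - x \<bullet> (DG z *v y))"
  using gp_Gam_Koszul[OF G_symmetric[OF p_in_U] G_invertible[OF p_in_U] linear_DG] .

lemma linear_Gam_right: "linear (Gam G p x)"
proof (rule linearI)
  show "Gam G p x (y1 + y2) = Gam G p x y1 + Gam G p x y2" for y1 y2
    by (rule g_eq_imp_eq) (simp add: g_Gam_Koszul linear_add[OF linear_DG] algebra_simps
        inner_add_left inner_add_right matrix_vector_right_distrib matrix_vector_mult_add_rdistrib)
  show "Gam G p x (c *\<^sub>R y) = c *\<^sub>R Gam G p x y" for c y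
    by (rule g_eq_imp_eq) (simp add: g_Gam_Koszul linear_scale[OF linear_DG] algebra_simps
        matrix_vector_mult_scaleR scaleR_matrix_vector_mult_left)
qed

lemma linear_Gam_left: "linear (\<lambda>x. Gam G p x y)"
proof (rule linearI)
  show "Gam G p (x1 + x2) y = Gam G p x1 y + Gam G p x2 y" for x1 x2
    by (rule g_eq_imp_eq) (simp add: g_Gam_Koszul linear_add[OF linear_DG] algebra_simps
        inner_add_left inner_add_right matrix_vector_mult_add_rdistrib)
  show "Gam G p (c *\<^sub>R x) y = c *\<^sub>R Gam G p x y" for c x
    by (rule g_eq_imp_eq) (simp add: g_Gam_Koszul linear_scale[OF linear_DG] algebra_simps
        scaleR_matrix_vector_mult_left)
qed

abbreviation "D2G a x \<equiv> frechet_derivative (\<lambda>q. frechet_derivative G (at q) a) (at p) x"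
abbreviation "DGam a b x \<equiv> frechet_derivative (\<lambda>q. Gam G q a b) (at p) x"

lemma DG_differentiable: "(\<lambda>q. frechet_derivative G (at q) v) differentiable (at p)"
  using smooth_on_differentiable_at[OF smooth_on_frechet_derivative[OF smooth_G] open_U p_in_U] .

lemma Gam_has_derivative: "((\<lambda>q. Gam G q a b) has_derivative DGam a b) (at p)"
  using Gam_differentiable[OF open_U p_in_U smooth_G G_invertible] frechet_derivative_works by blast

lemma D2G_symmetric: "D2G a x = D2G x a"
  by (rule second_frechet_derivative_symmetric[OF open_U p_in_U
        smooth_on_differentiable_at[OF smooth_G open_U] DG_differentiable DG_differentiable])

text \<open>Differentiating metric compatibility, valid throughout \<open>U\<close>, at \<open>p\<close>.\<close>

lemma DGam_compatible:
  "g (DGam a b x) c + g b (DGam a c x) =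
    b \<bullet> (D2G a x *v c) - Gam G p a b \<bullet> (DG x *v c) - b \<bullet> (DG x *v Gam G p a c)"
proof -
  have "((\<lambda>q. gp G q (Gam G q a b) c + gp G q b (Gam G q a c)) has_derivative
     (\<lambda>h. (DGam a b h \<bullet> (G p *v c) + Gam G p a b \<bullet> (DG h *v c) + Gam G p a b \<bullet> (G p *v 0))
        + (0 \<bullet> (G p *v Gam G p a c) + b \<bullet> (DG h *v Gam G p a c) + b \<bullet> (G p *v DGam a c h)))) (at p)"
    by (intro has_derivative_add has_derivative_gp[OF G_has_derivative Gam_has_derivative
        has_derivative_const] has_derivative_gp[OF G_has_derivative has_derivative_const
        Gam_has_derivative])
  moreover have "((\<lambda>q. b \<bullet> (frechet_derivative G (at q) a *v c)) has_derivative
      (\<lambda>h. b \<bullet> (DG a *v 0 + D2G a h *v c) + 0 \<bullet> (DG a *v c))) (at p)"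
    using DG_differentiable frechet_derivative_works
    by (intro has_derivative_inner[OF has_derivative_const] has_derivative_matrix_vector_mult
        has_derivative_const) blast
  ultimately have "(\<lambda>h. (DGam a b h \<bullet> (G p *v c) + Gam G p a b \<bullet> (DG h *v c) + Gam G p a b \<bullet> (G p *v 0))
        + (0 \<bullet> (G p *v Gam G p a c) + b \<bullet> (DG h *v Gam G p a c) + b \<bullet> (G p *v DGam a c h)))
      = (\<lambda>h. b \<bullet> (DG a *v 0 + D2G a h *v c) + 0 \<bullet> (DG a *v c))"
    by (rule has_derivative_eq_on_open[OF _ _ open_U p_in_U]) (use Gam_compatible in auto)
  from fun_cong[OF this, of x] show ?thesis
    unfolding gp_def by simp
qed

lemma Rm_skew: "g (Rm G p x y z) w = - g (Rm G p x y w) z"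
proof -
  have compat_Gam: "g (Gam G p u (Gam G p v z')) w' = Gam G p v z' \<bullet> (DG u *v w') - g (Gam G p v z') (Gam G p u w')"
    for u v z' w'
    using Gam_compatible[OF p_in_U, of u "Gam G p v z'" w'] by simp
  have DG_sym: "z' \<bullet> (DG u *v w') = w' \<bullet> (DG u *v z')" for u z' w'
    by (rule inner_symmetric_matrix_commute[OF DG_symmetric[OF p_in_U]])
  \<comment> \<open>the second derivatives of \<open>G\<close> cancel only because they are symmetric\<close>
  show ?thesis
    unfolding Rm_def gp_add_left gp_diff_left
    using DGam_compatible[of y z x w, unfolded D2G_symmetric[of y x]] DGam_compatible[of x z y w]
      compat_Gam[of x y z w] compat_Gam[of x y w z] compat_Gam[of y x z w] compat_Gam[of y x w z]
      g_commute[of "Gam G p y z" "Gam G p x w"] g_commute[of "Gam G p y w" "Gam G p x z"]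
      g_commute[of "DGam y w x" z] g_commute[of "DGam x w y" z]
      DG_sym[of z x "Gam G p y w"] DG_sym[of z y "Gam G p x w"]
    by linarith
qed

end

section \<open>The almost contact metric structure at a point\<close>

lemma almost_contact_algebra:
  fixes G Phi :: "real^'m \<Rightarrow> real^'m^'m" and Z :: "real^'m \<Rightarrow> real^'m"
  assumes pos: "\<forall>x. x \<noteq> 0 \<longrightarrow> gp G q x x > 0" and sym: "transpose (G q) = G q"
    and unit: "gp G q (Z q) (Z q) = 1"
    and square: "\<And>x. Phi q *v (Phi q *v x) = - x + etaf G Z q x *\<^sub>R Z q"
    and isometry: "\<And>x y. gp G q (Phi q *v x) (Phi q *v y) = gp G q x y - etaf G Z q x * etaf G Z q y"
  shows "Phi q *v Z q = 0" "etaf G Z q (Phi q *v x) = 0"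
    "gp G q (Phi q *v x) y = - gp G q x (Phi q *v y)"
proof -
  have "etaf G Z q (Z q) = 1" using unit by (simp add: etaf_def)
  then have "gp G q (Phi q *v Z q) (Phi q *v Z q) = 0" using isometry[of "Z q" "Z q"] unit by simp
  then show Phi_Z: "Phi q *v Z q = 0" using pos by force
  have eta_Phi: "etaf G Z q (Phi q *v v) = 0" for v
  proof -
    have "Phi q *v (Phi q *v (Phi q *v v)) = - (Phi q *v v)"
      using Phi_Z by (simp add: square matrix_vector_mult_diff_distrib matrix_vector_mult_scaleR)
    then have "etaf G Z q (Phi q *v v) *\<^sub>R Z q = 0" using square[of "Phi q *v v"] by simp
    moreover have "Z q \<noteq> 0" using unit by auto
    ultimately show ?thesis by simp
  qed
  then show "etaf G Z q (Phi q *v x) = 0" .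
  have "gp G q (Phi q *v x) (Phi q *v (Phi q *v y)) = gp G q x (Phi q *v y)"
    using isometry[of x "Phi q *v y"] eta_Phi by simp
  moreover have "gp G q (Phi q *v x) (Phi q *v (Phi q *v y)) = - gp G q (Phi q *v x) y"
    using square[of y] eta_Phi gp_commute[of G q, OF sym] by (simp add: etaf_def)
  ultimately show "gp G q (Phi q *v x) y = - gp G q x (Phi q *v y)" by simp
qed

locale almost_contact_point =
  fixes U :: "(real^'m) set" and G Phi :: "real^'m \<Rightarrow> real^'m^'m" and Z :: "real^'m \<Rightarrow> real^'m"
    and p :: "real^'m"
  assumes acm: "almost_contact_metric_on U G Phi Z" and point: "p \<in> U"
begin

sublocale riemannian_point U G p
  using acm point unfolding almost_contact_metric_on_def by unfold_locales auto

abbreviation "\<eta> \<equiv> etaf G Z p"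
abbreviation "\<zeta> \<equiv> Z p"
abbreviation "\<phi> \<equiv> Phi p"
abbreviation "\<xi> \<equiv> xi G Phi Z p"
abbreviation "nabla_phi \<equiv> covPhi G Phi p"
abbreviation "nabla_zeta x \<equiv> covV G p x Z"

lemma smooth_Phi: "smooth_on U Phi"
  using acm unfolding almost_contact_metric_on_def by simp
lemma smooth_Z: "smooth_on U Z"
  using acm unfolding almost_contact_metric_on_def by simp
lemma Z_unit: "r \<in> U \<Longrightarrow> gp G r (Z r) (Z r) = 1"
  using acm unfolding almost_contact_metric_on_def by simp
lemma Phi_square: "r \<in> U \<Longrightarrow> Phi r *v (Phi r *v x) = - x + etaf G Z r x *\<^sub>R Z r"
  using acm unfolding almost_contact_metric_on_def by simp
lemma Phi_isometry: "r \<in> U \<Longrightarrow> gp G r (Phi r *v x) (Phi r *v y) = gp G r x y - etaf G Z r x * etaf G Z r y"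
  using acm unfolding almost_contact_metric_on_def by simp

lemmas almost_contact_algebra_at =
  almost_contact_algebra[OF G_posdef G_symmetric Z_unit Phi_square Phi_isometry]

lemma Phi_Z: "r \<in> U \<Longrightarrow> Phi r *v Z r = 0"
  using almost_contact_algebra_at by blast
lemma eta_Phi: "r \<in> U \<Longrightarrow> etaf G Z r (Phi r *v x) = 0"
  using almost_contact_algebra_at by blast
lemma Phi_skew: "r \<in> U \<Longrightarrow> gp G r (Phi r *v x) y = - gp G r x (Phi r *v y)"
  using almost_contact_algebra_at by blast

lemma eta_eq_g: "\<eta> y = g y \<zeta>"
  by (simp add: etaf_def)

lemma eta_zeta: "\<eta> \<zeta> = 1"
  using Z_unit[OF p_in_U] by (simp add: etaf_def)

abbreviation "DPhi \<equiv> frechet_derivative Phi (at p)"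
abbreviation "DZ \<equiv> frechet_derivative Z (at p)"

lemma Phi_has_derivative: "(Phi has_derivative DPhi) (at p)"
  using smooth_on_has_derivative[OF smooth_Phi open_U p_in_U] .
lemma Z_has_derivative: "(Z has_derivative DZ) (at p)"
  using smooth_on_has_derivative[OF smooth_Z open_U p_in_U] .
lemma linear_DPhi: "linear DPhi"
  using smooth_on_linear_derivative[OF smooth_Phi open_U p_in_U] .
lemma linear_DZ: "linear DZ"
  using smooth_on_linear_derivative[OF smooth_Z open_U p_in_U] .

lemma Phi_vector_has_derivative: "((\<lambda>r. Phi r *v v) has_derivative (\<lambda>h. DPhi h *v v)) (at p)"
  using has_derivative_matrix_vector_mult[OF Phi_has_derivative has_derivative_const[of v]] by simp

lemma eta_has_derivative:
  "((\<lambda>r. etaf G Z r y) has_derivative (\<lambda>h. y \<bullet> (DG h *v \<zeta>) + y \<bullet> (G p *v DZ h))) (at p)"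
  using has_derivative_gp[OF G_has_derivative has_derivative_const[of y] Z_has_derivative]
  unfolding etaf_def by simp

text \<open>Each identity below differentiates at \<open>p\<close> a pointwise relation that holds on all of
  \<open>U\<close>, and metric compatibility trades the derivatives for covariant derivatives.\<close>

lemma g_nabla_zeta_zeta: "g (nabla_zeta x) \<zeta> = 0"
proof -
  have "((\<lambda>r. gp G r (Z r) (Z r)) has_derivative
     (\<lambda>h. DZ h \<bullet> (G p *v \<zeta>) + \<zeta> \<bullet> (DG h *v \<zeta>) + \<zeta> \<bullet> (G p *v DZ h))) (at p)"
    by (rule has_derivative_gp[OF G_has_derivative Z_has_derivative Z_has_derivative])
  then have "(\<lambda>h. DZ h \<bullet> (G p *v \<zeta>) + \<zeta> \<bullet> (DG h *v \<zeta>) + \<zeta> \<bullet> (G p *v DZ h)) = (\<lambda>h. 0)"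
    by (rule has_derivative_eq_on_open[OF _ has_derivative_const[of "1::real"] open_U p_in_U])
      (use Z_unit in auto)
  from fun_cong[OF this, of x] have "g (DZ x) \<zeta> + \<zeta> \<bullet> (DG x *v \<zeta>) + g \<zeta> (DZ x) = 0"
    by (simp add: gp_def)
  then show ?thesis
    using Gam_compatible[OF p_in_U, of x \<zeta> \<zeta>] g_commute[of \<zeta> "DZ x"]
      g_commute[of \<zeta> "Gam G p x \<zeta>"]
    unfolding covV_def by simp
qed

lemma covEta_eq_g_nabla_zeta: "covEta G Z p x y = g y (nabla_zeta x)"
proof -
  have "frechet_derivative (\<lambda>r. etaf G Z r y) (at p) = (\<lambda>h. y \<bullet> (DG h *v \<zeta>) + y \<bullet> (G p *v DZ h))"
    using frechet_derivative_at[OF eta_has_derivative] by simp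
  then show ?thesis
    using Gam_compatible[OF p_in_U, of x y \<zeta>]
    unfolding covEta_def covV_def
    by (simp add: etaf_def gp_def matrix_vector_right_distrib inner_add_right)
qed

lemma g_nabla_phi_skew: "g (nabla_phi x y) z = - g y (nabla_phi x z)"
proof -
  have "((\<lambda>r. gp G r (Phi r *v y) z + gp G r y (Phi r *v z)) has_derivative
     (\<lambda>h. ((DPhi h *v y) \<bullet> (G p *v z) + (\<phi> *v y) \<bullet> (DG h *v z) + (\<phi> *v y) \<bullet> (G p *v 0))
         + (0 \<bullet> (G p *v (\<phi> *v z)) + y \<bullet> (DG h *v (\<phi> *v z)) + y \<bullet> (G p *v (DPhi h *v z))))) (at p)"
    by (intro has_derivative_add has_derivative_gp[OF G_has_derivative Phi_vector_has_derivative
        has_derivative_const] has_derivative_gp[OF G_has_derivative has_derivative_const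
        Phi_vector_has_derivative])
  then have "(\<lambda>h. ((DPhi h *v y) \<bullet> (G p *v z) + (\<phi> *v y) \<bullet> (DG h *v z) + (\<phi> *v y) \<bullet> (G p *v 0))
         + (0 \<bullet> (G p *v (\<phi> *v z)) + y \<bullet> (DG h *v (\<phi> *v z)) + y \<bullet> (G p *v (DPhi h *v z)))) = (\<lambda>h. 0)"
    by (rule has_derivative_eq_on_open[OF _ has_derivative_const[of "0::real"] open_U p_in_U])
      (use Phi_skew in auto)
  from fun_cong[OF this, of x]
  have "g (DPhi x *v y) z + (\<phi> *v y) \<bullet> (DG x *v z) + y \<bullet> (DG x *v (\<phi> *v z)) + g y (DPhi x *v z) = 0"
    by (simp add: gp_def)
  moreover have "g (\<phi> *v Gam G p x y) z = - g (Gam G p x y) (\<phi> *v z)"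
    "g y (\<phi> *v Gam G p x z) = - g (\<phi> *v y) (Gam G p x z)"
    using Phi_skew[OF p_in_U, of "Gam G p x y" z] Phi_skew[OF p_in_U, of y "Gam G p x z"] by simp_all
  ultimately show ?thesis
    using Gam_compatible[OF p_in_U, of x "\<phi> *v y" z] Gam_compatible[OF p_in_U, of x y "\<phi> *v z"]
    unfolding covPhi_def by simp
qed

lemma nabla_phi_anticommute:
  "nabla_phi x (\<phi> *v y) + \<phi> *v nabla_phi x y = covEta G Z p x y *\<^sub>R \<zeta> + \<eta> y *\<^sub>R nabla_zeta x"
proof -
  define E' where "E' = frechet_derivative (\<lambda>r. etaf G Z r y) (at p)"
  have dE: "((\<lambda>r. etaf G Z r y) has_derivative E') (at p)"
    unfolding E'_def using eta_has_derivative[of y]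
    by (simp add: frechet_derivative_at[OF eta_has_derivative[of y], symmetric])
  have "((\<lambda>r. Phi r *v (Phi r *v y)) has_derivative
      (\<lambda>h. \<phi> *v (DPhi h *v y) + DPhi h *v (\<phi> *v y))) (at p)"
    by (rule has_derivative_matrix_vector_mult[OF Phi_has_derivative Phi_vector_has_derivative])
  moreover have "((\<lambda>r. - y + etaf G Z r y *\<^sub>R Z r) has_derivative
      (\<lambda>h. - 0 + (\<eta> y *\<^sub>R DZ h + E' h *\<^sub>R \<zeta>))) (at p)"
    by (intro has_derivative_add has_derivative_minus has_derivative_const has_derivative_scaleR
        dE Z_has_derivative)
  ultimately have "(\<lambda>h. \<phi> *v (DPhi h *v y) + DPhi h *v (\<phi> *v y))
      = (\<lambda>h. - 0 + (\<eta> y *\<^sub>R DZ h + E' h *\<^sub>R \<zeta>))"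
    by (rule has_derivative_eq_on_open[OF _ _ open_U p_in_U]) (use Phi_square in auto)
  from fun_cong[OF this, of x]
  have "\<phi> *v (DPhi x *v y) + DPhi x *v (\<phi> *v y) = \<eta> y *\<^sub>R DZ x + E' x *\<^sub>R \<zeta>"
    by simp
  moreover have "Gam G p x (\<phi> *v (\<phi> *v y)) = - Gam G p x y + \<eta> y *\<^sub>R Gam G p x \<zeta>"
    using Phi_square[OF p_in_U, of y] linear_Gam_right[of x]
    by (simp add: linear_diff linear_scale)
  ultimately show ?thesis
    unfolding covPhi_def covEta_def covV_def E'_def[symmetric]
    by (simp add: Phi_square[OF p_in_U, of "Gam G p x y"] matrix_vector_right_distrib
        matrix_vector_mult_diff_distrib algebra_simps)
qed

lemma linear_nabla_phi_right: "linear (nabla_phi x)"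
  using linear_Gam_right[of x]
  by (intro linearI) (simp_all add: covPhi_def linear_add linear_scale matrix_vector_right_distrib
      matrix_vector_mult_scaleR algebra_simps)

lemma linear_nabla_phi_left: "linear (\<lambda>x. nabla_phi x y)"
  by (intro linearI) (simp_all add: covPhi_def linear_add[OF linear_Gam_left]
      linear_scale[OF linear_Gam_left] linear_add[OF linear_DPhi] linear_scale[OF linear_DPhi]
      matrix_vector_right_distrib matrix_vector_mult_add_rdistrib matrix_vector_mult_scaleR
      scaleR_matrix_vector_mult_left algebra_simps)

lemma linear_nabla_zeta: "linear nabla_zeta"
  by (intro linearI) (simp_all add: covV_def linear_add[OF linear_Gam_left]
      linear_scale[OF linear_Gam_left] linear_add[OF linear_DZ] linear_scale[OF linear_DZ]
      algebra_simps)

lemma xi_eq: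
  "\<xi> x y = (1/2) *\<^sub>R nabla_phi x (\<phi> *v y) + ((1/2) * g y (nabla_zeta x)) *\<^sub>R \<zeta> - \<eta> y *\<^sub>R nabla_zeta x"
  unfolding xi_def covEta_eq_g_nabla_zeta ..

lemma linear_xi_right: "linear (\<xi> x)"
  using linear_nabla_phi_right[of x]
  by (intro linearI) (simp_all add: xi_eq linear_add linear_scale matrix_vector_right_distrib
      matrix_vector_mult_scaleR algebra_simps)

lemma linear_xi_left: "linear (\<lambda>x. \<xi> x y)"
  by (intro linearI) (simp_all add: xi_eq linear_add[OF linear_nabla_phi_left]
      linear_scale[OF linear_nabla_phi_left] linear_add[OF linear_nabla_zeta]
      linear_scale[OF linear_nabla_zeta] algebra_simps)

lemma phi_nabla_phi_zeta: "\<phi> *v nabla_phi x \<zeta> = nabla_zeta x"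
  using nabla_phi_anticommute[of x \<zeta>] Phi_Z[OF p_in_U] linear_0[OF linear_nabla_phi_right]
    g_nabla_zeta_zeta g_commute eta_zeta
  by (simp add: covEta_eq_g_nabla_zeta)

lemma xi_zeta: "\<xi> x \<zeta> = - nabla_zeta x"
  using Phi_Z[OF p_in_U] linear_0[OF linear_nabla_phi_right] g_nabla_zeta_zeta g_commute eta_zeta
  by (simp add: xi_eq)

lemma eta_xi: "\<eta> (\<xi> x y) = g y (nabla_zeta x)"
proof -
  have "g (nabla_phi x (\<phi> *v y)) \<zeta> = - g (\<phi> *v y) (nabla_phi x \<zeta>)"
    by (rule g_nabla_phi_skew)
  also have "\<dots> = g y (nabla_zeta x)"
    using Phi_skew[OF p_in_U, of y "nabla_phi x \<zeta>"] phi_nabla_phi_zeta by simp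
  finally show ?thesis
    using g_nabla_zeta_zeta Z_unit[OF p_in_U] unfolding xi_eq eta_eq_g by simp
qed

lemma perp_xi: "perp G Phi Z p (\<xi> x) = \<xi> x"
proof
  fix y
  have phi2: "\<phi> *v (\<phi> *v y) = (-1) *\<^sub>R y + \<eta> y *\<^sub>R \<zeta>"
    using Phi_square[OF p_in_U, of y] by simp
  have nabla_phi_phi2: "nabla_phi x (\<phi> *v (\<phi> *v y)) = (-1) *\<^sub>R nabla_phi x y + \<eta> y *\<^sub>R nabla_phi x \<zeta>"
    unfolding phi2 by (simp add: linear_diff[OF linear_nabla_phi_right] linear_scale[OF linear_nabla_phi_right])
  have A: "\<phi> *v \<xi> x (\<phi> *v y) = (-1/2) *\<^sub>R (\<phi> *v nabla_phi x y) + (1/2 * \<eta> y) *\<^sub>R nabla_zeta x"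
    unfolding xi_eq using eta_Phi[OF p_in_U, of y] Phi_Z[OF p_in_U]
    by (simp add: nabla_phi_phi2 phi_nabla_phi_zeta matrix_vector_right_distrib
        matrix_vector_mult_diff_distrib matrix_vector_mult_scaleR algebra_simps)
  have B: "nabla_phi x (\<phi> *v y) = - (\<phi> *v nabla_phi x y) + g y (nabla_zeta x) *\<^sub>R \<zeta> + \<eta> y *\<^sub>R nabla_zeta x"
    using nabla_phi_anticommute[of x y] unfolding covEta_eq_g_nabla_zeta by (simp add: algebra_simps)
  show "perp G Phi Z p (\<xi> x) y = \<xi> x y"
    unfolding perp_def eta_xi xi_zeta A unfolding xi_eq B by (simp add: vec_eq_iff algebra_simps)
qed

lemma g_xi_skew: "g (\<xi> x y) z = - g y (\<xi> x z)"
proof -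
  have "g y (nabla_phi x (\<phi> *v z)) = - g (nabla_phi x y) (\<phi> *v z)"
    using g_nabla_phi_skew[of x y "\<phi> *v z"] by simp
  also have "\<dots> = g (\<phi> *v nabla_phi x y) z"
    using Phi_skew[OF p_in_U, of "nabla_phi x y" z] by simp
  finally have "g y (nabla_phi x (\<phi> *v z)) = g (\<phi> *v nabla_phi x y) z" .
  moreover have "g (nabla_phi x (\<phi> *v y)) z + g (\<phi> *v nabla_phi x y) z
      = g y (nabla_zeta x) * g \<zeta> z + \<eta> y * g (nabla_zeta x) z"
    using arg_cong[OF nabla_phi_anticommute[of x y], of "\<lambda>v. g v z"]
    unfolding covEta_eq_g_nabla_zeta by simp
  ultimately show ?thesis
    using g_commute[of \<zeta> z] g_commute[of z "nabla_zeta x"] g_commute[of y "nabla_zeta x"]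
    unfolding xi_eq eta_eq_g by (simp add: algebra_simps)
qed

lemma g_xi_self: "g (\<xi> x y) y = 0"
  using g_xi_skew[of x y y] g_commute[of "\<xi> x y" y] by simp

lemma eta_xi_zeta: "\<eta> (\<xi> x \<zeta>) = 0"
  using g_xi_self[of x \<zeta>] by (simp add: eta_eq_g)

lemma xi_phi_horizontal:
  assumes "\<eta> y = 0"
  shows "\<xi> x (\<phi> *v y) = - (\<phi> *v \<xi> x y) + \<eta> (\<xi> x (\<phi> *v y)) *\<^sub>R \<zeta>"
proof -
  have "\<phi> *v (\<phi> *v y) = - y" using Phi_square[OF p_in_U, of y] assms by simp
  then have "\<phi> *v \<xi> x (\<phi> *v (\<phi> *v y)) = - (\<phi> *v \<xi> x y)"
    by (simp add: linear_neg[OF linear_xi_right])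
  with fun_cong[OF perp_xi, of x "\<phi> *v y"]
  have "(1/2) *\<^sub>R (\<xi> x (\<phi> *v y) + (- (\<phi> *v \<xi> x y) + \<eta> (\<xi> x (\<phi> *v y)) *\<^sub>R \<zeta>))
      = \<xi> x (\<phi> *v y)"
    using eta_Phi[OF p_in_U, of y] unfolding perp_def by (simp add: algebra_simps)
  from arg_cong[OF this, of "scaleR 2"] show ?thesis by (simp add: scaleR_2)
qed

end

context almost_contact_point
begin

lemma g_perp:
  "g (perp G Phi Z p C v) u = (1/2) * (g (C v) u - g (C (\<phi> *v v)) (\<phi> *v u)
    + \<eta> (C v) * \<eta> u + \<eta> v * g (C \<zeta>) u)"
  unfolding perp_def using Phi_skew[OF p_in_U, of "C (\<phi> *v v)" u] g_commute[of \<zeta> u]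
  by (simp add: eta_eq_g)

lemma g_commut_xi: "g (commut (\<xi> x) (\<xi> y) v) u = g (\<xi> x v) (\<xi> y u) - g (\<xi> x u) (\<xi> y v)"
  unfolding commut_def using g_commute[of "\<xi> x u" "\<xi> y v"]
  by (simp add: g_xi_skew[of x "\<xi> y v" u] g_xi_skew[of y "\<xi> x v" u])

lemma eta_commut_xi: "\<eta> (commut (\<xi> x) (\<xi> y) v) = g (\<xi> x v) (\<xi> y \<zeta>) - g (\<xi> x \<zeta>) (\<xi> y v)"
  using g_commut_xi[of x y v \<zeta>] by (simp add: eta_eq_g)

lemma xi_sum_left: "\<xi> (\<Sum>k\<in>K. c k *\<^sub>R v k) y = (\<Sum>k\<in>K. c k *\<^sub>R \<xi> (v k) y)"
  by (induction K rule: infinite_finite_induct)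
    (simp_all add: linear_add[OF linear_xi_left] linear_scale[OF linear_xi_left] linear_0[OF linear_xi_left])

lemma xi_sum_right: "\<xi> x (\<Sum>k\<in>K. c k *\<^sub>R v k) = (\<Sum>k\<in>K. c k *\<^sub>R \<xi> x (v k))"
  by (induction K rule: infinite_finite_induct)
    (simp_all add: linear_add[OF linear_xi_right] linear_scale[OF linear_xi_right] linear_0[OF linear_xi_right])

lemma eta_sum: "\<eta> (\<Sum>k\<in>K. f k) = (\<Sum>k\<in>K. \<eta> (f k))"
  unfolding eta_eq_g by (rule gp_sum_left)

end

section \<open>Adapted frames\<close>

locale almost_contact_frame = almost_contact_point U G Phi Z p
  for U :: "(real^'m) set" and G Phi Z p +
  fixes n :: nat and e :: "nat \<Rightarrow> real^'m"
  assumes dim: "CARD('m) = 2*n+1" and frame: "adapted_frame G Z p n e"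
begin

abbreviation "E a \<equiv> Efr n e (Z p) a"

lemma e_orthonormal: "i < 2*n \<Longrightarrow> j < 2*n \<Longrightarrow> g (e i) (e j) = (if i = j then 1 else 0)"
  using frame unfolding adapted_frame_def by blast

lemma eta_e: "i < 2*n \<Longrightarrow> \<eta> (e i) = 0"
  using frame unfolding adapted_frame_def by blast

lemma E_orthonormal: "a < 2*n+1 \<Longrightarrow> b < 2*n+1 \<Longrightarrow> g (E a) (E b) = (if a = b then 1 else 0)"
  using e_orthonormal[of a b] eta_e[of a] eta_e[of b] g_commute[of \<zeta> "e b"] Z_unit[OF p_in_U]
  by (auto simp: Efr_def eta_eq_g less_Suc_eq)

lemma sum_E: "(\<Sum>a<2*n+1. F (E a)) = (\<Sum>i<2*n. F (e i)) + F \<zeta>"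
  by (simp add: Efr_def)

lemma sum_E_sum_E: "(\<Sum>a<2*n+1. \<Sum>b<2*n+1. H (E a) (E b)) = (\<Sum>i<2*n. \<Sum>j<2*n. H (e i) (e j))
   + (\<Sum>i<2*n. H (e i) \<zeta>) + (\<Sum>j<2*n. H \<zeta> (e j)) + H \<zeta> \<zeta>"
proof -
  have "(\<Sum>a<2*n+1. \<Sum>b<2*n+1. H (E a) (E b)) = (\<Sum>a<2*n+1. (\<Sum>j<2*n. H (E a) (e j)) + H (E a) \<zeta>)"
    using sum_E[of "H (E _)"] by simp
  also have "\<dots> = (\<Sum>i<2*n. (\<Sum>j<2*n. H (e i) (e j)) + H (e i) \<zeta>) + ((\<Sum>j<2*n. H \<zeta> (e j)) + H \<zeta> \<zeta>)"
    by (rule sum_E)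
  finally show ?thesis by (simp add: sum.distrib add.assoc)
qed

lemma sum_eta_E: "(\<Sum>a<2*n+1. \<eta> (E a) * F a) = F (2*n)"
  using eta_e eta_zeta by (simp add: Efr_def)

lemma sum_mult_g_E: "b < 2*n+1 \<Longrightarrow> (\<Sum>a<2*n+1. f a * g (E a) (E b)) = f b"
  by (simp add: E_orthonormal if_distrib[of "(*) _"] cong: if_cong)

lemma inj_on_E: "inj_on E {..<2*n+1}"
  using E_orthonormal by (intro inj_onI) (metis lessThan_iff zero_neq_one)

text \<open>Orthonormality makes the \<open>2n+1\<close> vectors independent, hence a basis because
  \<open>CARD('m) = 2n+1\<close>; this is the only use of the dimension hypothesis.\<close>

lemma span_E: "v \<in> span (E ` {..<2*n+1})"
proof -
  let ?B = "E ` {..<2*n+1}"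
  have "independent ?B"
    unfolding independent_explicit
  proof (intro conjI allI impI ballI)
    show "finite ?B" by simp
    fix c v assume "(\<Sum>v\<in>?B. c v *\<^sub>R v) = 0" and "v \<in> ?B"
    then obtain b where b: "b < 2*n+1" "v = E b" and "(\<Sum>a<2*n+1. c (E a) *\<^sub>R E a) = 0"
      by (auto simp only: sum.reindex[OF inj_on_E] o_def)
    then have "g (\<Sum>a<2*n+1. c (E a) *\<^sub>R E a) (E b) = 0" by simp
    then have "(\<Sum>a<2*n+1. c (E a) * g (E a) (E b)) = 0" by (simp only: gp_sum_left gp_scaleR_left)
    then show "c v = 0" using sum_mult_g_E[OF b(1), of "\<lambda>a. c (E a)"] b(2) by simp
  qed
  moreover have "dim (UNIV :: (real^'m) set) \<le> card ?B"
    using card_image[OF inj_on_E] dim by simp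
  ultimately show ?thesis using card_ge_dim_independent[of ?B UNIV] by blast
qed

lemma E_expansion: "v = (\<Sum>a<2*n+1. g v (E a) *\<^sub>R E a)"
proof -
  obtain c where c: "v = (\<Sum>a<2*n+1. c (E a) *\<^sub>R E a)"
    using span_E[of v] unfolding span_finite[OF finite_imageI[OF finite_lessThan]]
    by (auto simp only: sum.reindex[OF inj_on_E] o_def)
  have "g v (E b) = c (E b)" if "b < 2*n+1" for b
    using sum_mult_g_E[OF that] by (subst c) (simp add: gp_sum_left)
  then show ?thesis using c by (metis (no_types, lifting) lessThan_iff sum.cong)
qed

lemma g_Parseval: "g u v = (\<Sum>a<2*n+1. g u (E a) * g v (E a))"
  using arg_cong[OF E_expansion[of u], of "\<lambda>w. g w v"] g_commute
  by (simp add: gp_sum_left)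

lemma g_Parseval_horizontal: "(\<Sum>k<2*n. g u (e k) * g v (e k)) = g u v - \<eta> u * \<eta> v"
  using g_Parseval[of u v] sum_E[of "\<lambda>w. g u w * g v w"] by (simp add: eta_eq_g)

lemma horizontal_expansion: "\<eta> v = 0 \<Longrightarrow> v = (\<Sum>k<2*n. g v (e k) *\<^sub>R e k)"
  using E_expansion[of v] sum_E[of "\<lambda>w. g v w *\<^sub>R w"] by (simp add: eta_eq_g)

end

section \<open>The two scalar curvature identities\<close>

lemma double_sum_linear_combination:
  "(\<Sum>i\<in>I. \<Sum>j\<in>J. (k::real) * (f i j - g i j + h i j + l i j))
   = k * ((\<Sum>i\<in>I. \<Sum>j\<in>J. f i j) - (\<Sum>i\<in>I. \<Sum>j\<in>J. g i j)
          + (\<Sum>i\<in>I. \<Sum>j\<in>J. h i j) + (\<Sum>i\<in>I. \<Sum>j\<in>J. l i j))"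
  by (simp only: sum_distrib_left[symmetric] sum.distrib sum_subtractf)

context almost_contact_frame
begin

lemma i7_eq: "i7 G Phi Z n e p = (\<Sum>j<2*n. g (\<xi> \<zeta> (e j)) (\<xi> (e j) \<zeta>))"
  unfolding i7_def alpha_def by (simp add: g_Parseval_horizontal eta_xi_zeta)

lemma i17_eq: "i17 G Phi Z n e p = g (\<Sum>i<2*n. \<xi> (e i) (e i)) (\<xi> \<zeta> \<zeta>)"
  unfolding i17_def alpha_def by (simp add: g_Parseval_horizontal eta_xi_zeta gp_sum_left)

lemma i10_eq: "i10 G Phi Z n e p = \<eta> (\<Sum>i<2*n. \<xi> (e i) (e i)) * \<eta> (\<Sum>i<2*n. \<xi> (e i) (e i))"
  unfolding i10_def alpha_def eta_eq_g[symmetric] eta_sum by (simp add: sum_product)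

lemma i14_eq:
  "i14 G Phi Z n e p = \<eta> (\<Sum>i<2*n. \<xi> (e i) (\<phi> *v e i)) * \<eta> (\<Sum>i<2*n. \<xi> (e i) (\<phi> *v e i))"
  unfolding i14_def alpha_def eta_eq_g[symmetric] eta_sum by (simp add: sum_product)

text \<open>Expanding \<open>\<phi> e\<^sub>j\<close> in the frame and using the skew-symmetry of \<open>\<phi>\<close>
  moves \<open>\<phi>\<close> from one slot to the other.\<close>

lemma i12_phi_swap:
  "(\<Sum>i<2*n. \<Sum>j<2*n. \<eta> (\<xi> (e i) (\<phi> *v e j)) * \<eta> (\<xi> (e j) (\<phi> *v e i))) = - i12 G Phi Z n e p"
proof -
  define B where "B x y = \<eta> (\<xi> x y)" for x y
  define c where "c j l = g (\<phi> *v e j) (e l)" for j l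
  have phi_e: "\<phi> *v e j = (\<Sum>l<2*n. c j l *\<^sub>R e l)" for j
    unfolding c_def by (rule horizontal_expansion[OF eta_Phi[OF p_in_U]])
  have B_right: "B x (\<phi> *v e j) = (\<Sum>l<2*n. c j l * B x (e l))" for x j
    unfolding B_def by (subst phi_e) (simp add: xi_sum_right eta_sum)
  have B_left: "(\<Sum>j<2*n. c l j * B (e j) y) = B (\<phi> *v e l) y" for l y
    unfolding B_def by (subst phi_e) (simp add: xi_sum_left eta_sum)
  have c_skew: "c j l = - c l j" for j l
    unfolding c_def using Phi_skew[OF p_in_U, of "e j" "e l"] g_commute[of "e j" "\<phi> *v e l"] by simp
  have "(\<Sum>i<2*n. \<Sum>j<2*n. B (e i) (\<phi> *v e j) * B (e j) (\<phi> *v e i))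
      = (\<Sum>i<2*n. \<Sum>j<2*n. \<Sum>l<2*n. c j l * B (e i) (e l) * B (e j) (\<phi> *v e i))"
    by (simp only: B_right sum_distrib_right)
  also have "\<dots> = (\<Sum>i<2*n. \<Sum>l<2*n. \<Sum>j<2*n. c j l * B (e i) (e l) * B (e j) (\<phi> *v e i))"
    by (rule sum.cong[OF refl]) (rule sum.swap)
  also have "\<dots> = (\<Sum>i<2*n. \<Sum>l<2*n. - (B (e i) (e l) * (\<Sum>j<2*n. c l j * B (e j) (\<phi> *v e i))))"
  proof -
    have "c j l * B (e i) (e l) * B (e j) (\<phi> *v e i) = - (B (e i) (e l) * (c l j * B (e j) (\<phi> *v e i)))"
      for i j l by (subst c_skew) simp
    then show ?thesis by (simp only: sum_distrib_left sum_negf)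
  qed
  also have "\<dots> = - (\<Sum>i<2*n. \<Sum>l<2*n. B (e i) (e l) * B (\<phi> *v e l) (\<phi> *v e i))"
    by (simp only: B_left sum_negf)
  finally show ?thesis unfolding i12_def alpha_def eta_eq_g[symmetric] B_def .
qed

lemma g_xi_phi_horizontal:
  assumes "\<eta> y1 = 0" "\<eta> y2 = 0"
  shows "g (\<xi> x1 (\<phi> *v y1)) (\<xi> x2 (\<phi> *v y2)) = g (\<xi> x1 y1) (\<xi> x2 y2)
     - \<eta> (\<xi> x1 y1) * \<eta> (\<xi> x2 y2) + \<eta> (\<xi> x1 (\<phi> *v y1)) * \<eta> (\<xi> x2 (\<phi> *v y2))"
proof -
  let ?u = "\<xi> x1 y1" and ?v = "\<xi> x2 y2"
  let ?s = "\<eta> (\<xi> x1 (\<phi> *v y1))" and ?t = "\<eta> (\<xi> x2 (\<phi> *v y2))"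
  have "g (\<xi> x1 (\<phi> *v y1)) (\<xi> x2 (\<phi> *v y2)) = g (- (\<phi> *v ?u) + ?s *\<^sub>R \<zeta>) (- (\<phi> *v ?v) + ?t *\<^sub>R \<zeta>)"
    using xi_phi_horizontal[OF assms(1)] xi_phi_horizontal[OF assms(2)] by simp
  also have "\<dots> = g (\<phi> *v ?u) (\<phi> *v ?v) - ?t * g (\<phi> *v ?u) \<zeta> - ?s * g \<zeta> (\<phi> *v ?v) + ?s * ?t * g \<zeta> \<zeta>"
    by (simp add: algebra_simps)
  also have "\<dots> = g ?u ?v - \<eta> ?u * \<eta> ?v + ?s * ?t"
    using eta_Phi[OF p_in_U, of ?u] eta_Phi[OF p_in_U, of ?v] g_commute[of \<zeta> "\<phi> *v ?v"]
      Phi_isometry[OF p_in_U] Z_unit[OF p_in_U]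
    by (simp add: eta_eq_g)
  finally show ?thesis .
qed

text \<open>From here on the sums over the \<open>2n+1\<close> frame vectors must not be split by the simplifier.\<close>

declare sum.lessThan_Suc [simp del] lessThan_Suc [simp del]

lemma scal_alt_perp_expand:
  defines "V \<equiv> \<Sum>a<2*n+1. \<xi> (E a) (E a)"
    and "W \<equiv> \<Sum>a<2*n+1. \<xi> (E a) (\<phi> *v E a)"
    and "X1 \<equiv> \<Sum>a<2*n+1. \<Sum>b<2*n+1. g (\<xi> (E a) (E b)) (\<xi> (E b) (E a))"
    and "X2 \<equiv> \<Sum>a<2*n+1. \<Sum>b<2*n+1. g (\<xi> (E a) (\<phi> *v E b)) (\<xi> (E b) (\<phi> *v E a))"
    and "Y \<equiv> \<Sum>b<2*n+1. g (\<xi> \<zeta> (E b)) (\<xi> (E b) \<zeta>)"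
  shows "scal_alt_perp G Phi Z n e p = (1/2) * (X1 - g V V - X2 + g W W) + Y - g V (\<xi> \<zeta> \<zeta>)"
proof -
  let ?C = "\<lambda>a b. commut (\<xi> (E a)) (\<xi> (E b))"
  have T1: "(\<Sum>a<2*n+1. \<Sum>b<2*n+1. g (?C a b (E b)) (E a)) = X1 - g V V"
    unfolding V_def X1_def g_commut_xi gp_sum_sum
    by (simp add: sum.distrib sum_subtractf)
  have T2: "(\<Sum>a<2*n+1. \<Sum>b<2*n+1. g (?C a b (\<phi> *v E b)) (\<phi> *v E a)) = X2 - g W W"
    unfolding W_def X2_def g_commut_xi gp_sum_sum
    by (simp add: sum.distrib sum_subtractf)
  have T3: "(\<Sum>a<2*n+1. \<Sum>b<2*n+1. \<eta> (?C a b (E b)) * \<eta> (E a)) = Y - g V (\<xi> \<zeta> \<zeta>)"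
  proof -
    have "(\<Sum>a<2*n+1. \<Sum>b<2*n+1. \<eta> (?C a b (E b)) * \<eta> (E a))
        = (\<Sum>a<2*n+1. \<eta> (E a) * (\<Sum>b<2*n+1. \<eta> (?C a b (E b))))"
      by (simp add: sum_distrib_left mult.commute)
    also have "\<dots> = (\<Sum>b<2*n+1. \<eta> (?C (2*n) b (E b)))"
      by (rule sum_eta_E)
    also have "\<dots> = Y - g V (\<xi> \<zeta> \<zeta>)"
      unfolding eta_commut_xi V_def Y_def
      by (simp add: Efr_def sum_subtractf gp_sum_left g_commute[of "\<xi> \<zeta> \<zeta>"])
    finally show ?thesis .
  qed
  have T4: "(\<Sum>a<2*n+1. \<Sum>b<2*n+1. \<eta> (E b) * g (?C a b \<zeta>) (E a)) = Y - g V (\<xi> \<zeta> \<zeta>)"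
  proof -
    have "(\<Sum>a<2*n+1. \<Sum>b<2*n+1. \<eta> (E b) * g (?C a b \<zeta>) (E a)) = (\<Sum>a<2*n+1. g (?C a (2*n) \<zeta>) (E a))"
      by (simp only: sum_eta_E)
    also have "\<dots> = Y - g V (\<xi> \<zeta> \<zeta>)"
      unfolding g_commut_xi V_def Y_def
      by (simp add: Efr_def sum_subtractf gp_sum_left g_commute)
    finally show ?thesis .
  qed
  have "scal_alt_perp G Phi Z n e p = (\<Sum>a<2*n+1. \<Sum>b<2*n+1. (1/2) *
      (g (?C a b (E b)) (E a) - g (?C a b (\<phi> *v E b)) (\<phi> *v E a)
       + \<eta> (?C a b (E b)) * \<eta> (E a) + \<eta> (E b) * g (?C a b \<zeta>) (E a)))"
    unfolding scal_alt_perp_def g_perp ..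
  also have "\<dots> = (1/2) * ((X1 - g V V) - (X2 - g W W) + (Y - g V (\<xi> \<zeta> \<zeta>)) + (Y - g V (\<xi> \<zeta> \<zeta>)))"
    unfolding double_sum_linear_combination T1 T2 T3 T4 ..
  finally show ?thesis by (simp add: field_simps)
qed

lemma g_phi_trace_xi:
  defines "W \<equiv> \<Sum>a<2*n+1. \<xi> (E a) (\<phi> *v E a)" and "V \<equiv> \<Sum>i<2*n. \<xi> (e i) (e i)"
  shows "g W W = g V V - i10 G Phi Z n e p + i14 G Phi Z n e p"
proof -
  have W_horizontal: "W = (\<Sum>i<2*n. \<xi> (e i) (\<phi> *v e i))"
    unfolding W_def using sum_E[of "\<lambda>w. \<xi> w (\<phi> *v w)"] Phi_Z[OF p_in_U] linear_0[OF linear_xi_right]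
    by simp
  have "W = (\<Sum>i<2*n. - (\<phi> *v \<xi> (e i) (e i)) + \<eta> (\<xi> (e i) (\<phi> *v e i)) *\<^sub>R \<zeta>)"
    unfolding W_horizontal by (intro sum.cong refl xi_phi_horizontal eta_e) simp
  also have "\<dots> = - (\<phi> *v V) + \<eta> W *\<^sub>R \<zeta>"
    unfolding V_def W_horizontal eta_sum
    by (simp add: sum.distrib sum_negf sum_subtractf matrix_vector_mult_sum_right scaleR_sum_left)
  finally have "g W W = g (- (\<phi> *v V) + \<eta> W *\<^sub>R \<zeta>) (- (\<phi> *v V) + \<eta> W *\<^sub>R \<zeta>)"
    by simp
  also have "\<dots> = g V V - \<eta> V * \<eta> V + \<eta> W * \<eta> W"
    using eta_Phi[OF p_in_U, of V] g_commute[of \<zeta> "\<phi> *v V"] Phi_isometry[OF p_in_U, of V V]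
      Z_unit[OF p_in_U]
    by (simp add: eta_eq_g algebra_simps)
  finally show ?thesis
    unfolding i10_eq i14_eq V_def W_horizontal .
qed

lemma sum_g_xi_transpose:
  "(\<Sum>a<2*n+1. \<Sum>b<2*n+1. g (\<xi> (E a) (E b)) (\<xi> (E b) (E a)))
    = (\<Sum>i<2*n. \<Sum>j<2*n. g (\<xi> (e i) (e j)) (\<xi> (e j) (e i)))
      + 2 * i7 G Phi Z n e p + g (\<xi> \<zeta> \<zeta>) (\<xi> \<zeta> \<zeta>)"
proof -
  have "(\<Sum>i<2*n. g (\<xi> (e i) \<zeta>) (\<xi> \<zeta> (e i))) = i7 G Phi Z n e p"
    unfolding i7_eq by (intro sum.cong refl) (rule g_commute)
  then show ?thesis
    using sum_E_sum_E[of "\<lambda>x y. g (\<xi> x y) (\<xi> y x)"] unfolding i7_eq by simp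
qed

lemma sum_g_xi_phi_transpose:
  "(\<Sum>a<2*n+1. \<Sum>b<2*n+1. g (\<xi> (E a) (\<phi> *v E b)) (\<xi> (E b) (\<phi> *v E a)))
    = (\<Sum>i<2*n. \<Sum>j<2*n. g (\<xi> (e i) (e j)) (\<xi> (e j) (e i)))
      - i8 G Phi Z n e p - i12 G Phi Z n e p"
proof -
  have "(\<Sum>a<2*n+1. \<Sum>b<2*n+1. g (\<xi> (E a) (\<phi> *v E b)) (\<xi> (E b) (\<phi> *v E a)))
      = (\<Sum>i<2*n. \<Sum>j<2*n. g (\<xi> (e i) (\<phi> *v e j)) (\<xi> (e j) (\<phi> *v e i)))"
    using sum_E_sum_E[of "\<lambda>x y. g (\<xi> x (\<phi> *v y)) (\<xi> y (\<phi> *v x))"] Phi_Z[OF p_in_U]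
      linear_0[OF linear_xi_right]
    by simp
  also have "\<dots> = (\<Sum>i<2*n. \<Sum>j<2*n. g (\<xi> (e i) (e j)) (\<xi> (e j) (e i))
      - \<eta> (\<xi> (e i) (e j)) * \<eta> (\<xi> (e j) (e i))
      + \<eta> (\<xi> (e i) (\<phi> *v e j)) * \<eta> (\<xi> (e j) (\<phi> *v e i)))"
    by (intro sum.cong refl g_xi_phi_horizontal eta_e) simp_all
  also have "\<dots> = (\<Sum>i<2*n. \<Sum>j<2*n. g (\<xi> (e i) (e j)) (\<xi> (e j) (e i)))
      - i8 G Phi Z n e p - i12 G Phi Z n e p"
    unfolding diff_conv_add_uminus[of _ "i12 G Phi Z n e p"] i12_phi_swap[symmetric] i8_def alpha_def
      eta_eq_g[symmetric]
    by (simp add: sum.distrib sum_subtractf)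
  finally show ?thesis .
qed

theorem scal_alt_perp_formula:
  "scal_alt_perp G Phi Z n e p =
    (1/2) * (i8 G Phi Z n e p - i10 G Phi Z n e p + i12 G Phi Z n e p + i14 G Phi Z n e p)
    + 2 * (i7 G Phi Z n e p - i17 G Phi Z n e p)"
proof -
  define V where "V = (\<Sum>i<2*n. \<xi> (e i) (e i))"
  define R where "R = \<xi> \<zeta> \<zeta>"
  have "(\<Sum>a<2*n+1. \<xi> (E a) (E a)) = V + R"
    unfolding V_def R_def by (rule sum_E)
  moreover have "g V R = i17 G Phi Z n e p"
    unfolding V_def R_def i17_eq ..
  moreover have "(\<Sum>b<2*n+1. g (\<xi> \<zeta> (E b)) (\<xi> (E b) \<zeta>)) = i7 G Phi Z n e p + g R R"
    unfolding R_def i7_eq by (rule sum_E)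
  ultimately show ?thesis
    unfolding scal_alt_perp_expand sum_g_xi_transpose sum_g_xi_phi_transpose g_phi_trace_xi
    using g_commute[of R V] by (simp add: V_def R_def algebra_simps)
qed

theorem scal_perp_formula:
  "scal_perp G Phi Z n e p = (1/2) * (scal G Z n e p - scal_star G Phi Z n e p) + Ric G Z n e p \<zeta> \<zeta>"
proof -
  let ?R = "\<lambda>a b. Rm G p (E a) (E b)"
  have "scal_perp G Phi Z n e p = (\<Sum>a<2*n+1. \<Sum>b<2*n+1. (1/2) *
      (g (?R a b (E b)) (E a) - g (?R a b (\<phi> *v E b)) (\<phi> *v E a)
       + \<eta> (?R a b (E b)) * \<eta> (E a) + \<eta> (E b) * g (?R a b \<zeta>) (E a)))"
    unfolding scal_perp_def g_perp ..
  also have "\<dots> = (1/2) * (scal G Z n e p - scal_star G Phi Z n e p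
      + (\<Sum>a<2*n+1. \<Sum>b<2*n+1. \<eta> (?R a b (E b)) * \<eta> (E a))
      + (\<Sum>a<2*n+1. \<Sum>b<2*n+1. \<eta> (E b) * g (?R a b \<zeta>) (E a)))"
    unfolding double_sum_linear_combination scal_def scal_star_def ..
  also have "(\<Sum>a<2*n+1. \<Sum>b<2*n+1. \<eta> (?R a b (E b)) * \<eta> (E a)) = Ric G Z n e p \<zeta> \<zeta>"
  proof -
    have "(\<Sum>a<2*n+1. \<Sum>b<2*n+1. \<eta> (?R a b (E b)) * \<eta> (E a))
        = (\<Sum>a<2*n+1. \<eta> (E a) * (\<Sum>b<2*n+1. \<eta> (?R a b (E b))))"
      by (simp add: sum_distrib_left mult.commute)
    also have "\<dots> = (\<Sum>b<2*n+1. \<eta> (?R (2*n) b (E b)))"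
      by (rule sum_eta_E)
    finally show ?thesis by (simp add: Ric_def Efr_def eta_eq_g)
  qed
  also have "(\<Sum>a<2*n+1. \<Sum>b<2*n+1. \<eta> (E b) * g (?R a b \<zeta>) (E a)) = Ric G Z n e p \<zeta> \<zeta>"
  proof -
    have "(\<Sum>a<2*n+1. \<Sum>b<2*n+1. \<eta> (E b) * g (?R a b \<zeta>) (E a)) = (\<Sum>a<2*n+1. g (?R a (2*n) \<zeta>) (E a))"
      by (simp only: sum_eta_E)
    also have "\<dots> = (\<Sum>a<2*n+1. g (Rm G p \<zeta> (E a) (E a)) \<zeta>)"
    proof (rule sum.cong[OF refl])
      fix a
      have "Rm G p (E a) \<zeta> (E a) = - Rm G p \<zeta> (E a) (E a)"
        unfolding Rm_def by simp
      then show "g (?R a (2*n) \<zeta>) (E a) = g (Rm G p \<zeta> (E a) (E a)) \<zeta>"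
        using Rm_skew[of "E a" \<zeta> \<zeta> "E a"] by (simp add: Efr_def)
    qed
    finally show ?thesis unfolding Ric_def .
  qed
  finally show ?thesis by (simp add: field_simps)
qed

end

theorem mainTheorem11:
  fixes n :: nat
    and U :: "(real^'m) set"
    and G Phi :: "real^'m \<Rightarrow> real^'m^'m"
    and Z :: "real^'m \<Rightarrow> real^'m"
    and p :: "real^'m"
    and e :: "nat \<Rightarrow> real^'m"
  assumes "CARD('m) = 2*n+1"
    and "almost_contact_metric_on U G Phi Z"
    and "p \<in> U"
    and "adapted_frame G Z p n e"
  shows "scal_alt_perp G Phi Z n e p =
           (1/2) * (i8 G Phi Z n e p - i10 G Phi Z n e p + i12 G Phi Z n e p + i14 G Phi Z n e p)
           + 2 * (i7 G Phi Z n e p - i17 G Phi Z n e p)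
       \<and> scal_perp G Phi Z n e p =
           (1/2) * (scal G Z n e p - scal_star G Phi Z n e p) + Ric G Z n e p (Z p) (Z p)"
proof -
  interpret almost_contact_frame U G Phi Z p n e
    using assms by unfold_locales
  show ?thesis using scal_alt_perp_formula scal_perp_formula ..
qed

end
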